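(* Let $d\ge 1$ and let $(K_1,g_1)$ and $(K_2,g_2)$ be weighted simplicial complexes in $\mathbb{R}^d$. If $\mathrm{WECT}_{K_1,g_1}(v,r)=\mathrm{WECT}_{K_2,g_2}(v,r)$ for all $(v,r)\in S^{d-1}\times\mathbb{R}$, then $(K_1,g_1)=(K_2,g_2)$ in the sense that the associated functions agree: $\hat g_1(x)=\hat g_2(x)$ for all $x\in\mathbb{R}^d$ (in particular the underlying point sets $|K_1|$ and $|K_2|$ coincide).
   Context: A weighted simplicial complex in $\mathbb{R}^d$ is a pair $(K,g)$ where $K$ is a finite simplicial complex embedded in $\mathbb{R}^d$ (a finite set of geometric simplices in $\mathbb{R}^d$, closed under taking faces, any two of which intersect in a common face or not at all) and $g:K\to\mathbb{N}=\{1,2,3,\dots\}$ is an arbitrary function. $K^{\ell}$ denotes the set of $\ell$-dimensional simplices of $K$. For a subcomplex $L\subseteq K$, the weighted Euler characteristic is $\chi^w(L,g)=\sum_{\ell\ge 0}(-1)^{\ell}\sum_{\sigma\in L^{\ell}}g(\sigma)$ (equal to $0$ for $L=\emptyset$). For a direction $v\in S^{d-1}$, define $p_v:K\to\mathbb{R}$ by $p_v(\sigma)=v\cdot\sigma$ for vertices $\sigma\in K^0$ and, inductively, $p_v(\sigma)=\max\{p_v(\tau)\mid \tau \text{ a proper face of }\sigma\}$ for higher-dimensional simplices (equivalently, the maximum of $v\cdot w$ over the vertices $w$ of $\sigma$); each sublevel set $p_v^{-1}((-\infty,r])$ is a subcomplex of $K$. The Weighted Euler Characteristic Transform of $(K,g)$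 is the function $\mathrm{WECT}_{K,g}:S^{d-1}\times\mathbb{R}\to\mathbb{Z}$, $$\mathrm{WECT}_{K,g}(v,r)=\chi^w\big(p_v^{-1}((-\infty,r]),\,g|_{p_v^{-1}((-\infty,r])}\big).$$ The function associated to $(K,g)$ is $\hat g:\mathbb{R}^d\to\mathbb{Z}_{\ge 0}$ defined by $\hat g(x)=g(\sigma)$ if $x$ lies in the relative interior of the (unique) simplex $\sigma\in K$ whose relative interior contains $x$, and $\hat g(x)=0$ if $x\notin |K|=\bigcup_{\sigma\in K}\sigma$. *)

theory Defs
  imports "HOL-Analysis.Analysis"
begin

text \<open>A geometric simplex is represented by its (finite, nonempty, affinely
independent) vertex set; the geometric simplex itself is its convex hull.
Its dimension is the number of vertices minus one.\<close>

definition is_simplex :: "'a::euclidean_space set \<Rightarrow> bool" where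
  "is_simplex S \<longleftrightarrow> finite S \<and> S \<noteq> {} \<and> \<not> affine_dependent S"

definition simplex_dim :: "'a set \<Rightarrow> nat" where
  "simplex_dim S = card S - 1"

definition simplicial_complex :: "'a::euclidean_space set set \<Rightarrow> bool" where
  "simplicial_complex K \<longleftrightarrow>
     finite K \<and>
     (\<forall>S\<in>K. is_simplex S) \<and>
     (\<forall>S\<in>K. \<forall>T. T \<subseteq> S \<and> T \<noteq> {} \<longrightarrow> T \<in> K) \<and>
     (\<forall>S\<in>K. \<forall>T\<in>K. convex hull S \<inter> convex hull T = convex hull (S \<inter> T))"

definition weighted_complex :: "'a::euclidean_space set set \<Rightarrow> ('a set \<Rightarrow> nat) \<Rightarrow> bool" where
  "weighted_complex K g \<longleftrightarrow> simplicial_complex K \<and> (\<forall>S\<in>K. g S \<ge> 1)"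

definition height :: "'a::euclidean_space \<Rightarrow> 'a set \<Rightarrow> real" where
  "height v S = Max ((\<lambda>w. v \<bullet> w) ` S)"

definition sublevel :: "'a::euclidean_space set set \<Rightarrow> 'a \<Rightarrow> real \<Rightarrow> 'a set set" where
  "sublevel K v r = {S \<in> K. height v S \<le> r}"

definition weighted_euler_char :: "'a set set \<Rightarrow> ('a set \<Rightarrow> nat) \<Rightarrow> int" where
  "weighted_euler_char L g = (\<Sum>S\<in>L. (-1) ^ simplex_dim S * int (g S))"

definition WECT :: "'a::euclidean_space set set \<Rightarrow> ('a set \<Rightarrow> nat) \<Rightarrow> 'a \<Rightarrow> real \<Rightarrow> int" where
  "WECT K g v r = weighted_euler_char (sublevel K v r) g"

definition underlying_space :: "'a::euclidean_space set set \<Rightarrow> 'a set" where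
  "underlying_space K = (\<Union>S\<in>K. convex hull S)"

definition assoc_fun :: "'a::euclidean_space set set \<Rightarrow> ('a set \<Rightarrow> nat) \<Rightarrow> 'a \<Rightarrow> nat" where
  "assoc_fun K g x =
     (if \<exists>S\<in>K. x \<in> rel_interior (convex hull S)
      then g (THE S. S \<in> K \<and> x \<in> rel_interior (convex hull S))
      else 0)"

end

theory Submission
  imports Defs
begin

text \<open>
  A common hyperplane arrangement cuts both complexes into relatively open cells, each lying
  in the relative interior of one simplex of each complex, so that \<open>\<hat>g\<^sub>1 - \<hat>g\<^sub>2\<close> is constant
  on every cell. Passing from closed sublevel sets to open half-spaces, equality of the WECTs
  says that the closures of the cells, weighted by this constant and by \<open>(-1)^(dim + 1)\<close>, have
  vanishing total weight in every open half-space \<open>{y. v \<bullet> y < r}\<close>. Such a transform of a family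
  of polytopes with disjoint relative interiors determines the weights, by induction on the
  dimension: take a vertex \<open>w\<close> of maximal norm; tilting directions around \<open>w\<close> isolates the
  polytopes containing \<open>w\<close>, and slicing these just below \<open>w\<close> yields a lower-dimensional family
  whose transform again vanishes.
\<close>

section \<open>Convex geometry\<close>

lemma relatively_open_convex_in_halfspace:
  fixes C :: "'a::euclidean_space set"
  assumes "convex C" "rel_interior C = C" "C \<subseteq> {x. a \<bullet> x \<le> b}"
  shows "C \<subseteq> {x. a \<bullet> x < b} \<or> C \<subseteq> {x. a \<bullet> x = b}"
proof -
  have "a \<bullet> x = b" if p: "p \<in> C" "a \<bullet> p = b" and x: "x \<in> C" for p x
  proof -
    have "x \<in> affine hull C" using x by (rule hull_inc)
    then obtain e where e: "e > 1" "(1 - e) *\<^sub>R x + e *\<^sub>R p \<in> C"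
      using convex_rel_interior_if2[OF assms(1)] p assms(2) by blast
    then have "(1 - e) * (a \<bullet> x) + e * b \<le> b" using assms(3) p by (auto simp: inner_simps)
    then have "(e - 1) * (b - a \<bullet> x) \<le> 0" by (simp add: algebra_simps)
    then have "b \<le> a \<bullet> x" using e(1) by (simp add: mult_le_0_iff)
    moreover have "a \<bullet> x \<le> b" using x assms(3) by blast
    ultimately show ?thesis by linarith
  qed
  then show ?thesis using assms(3) by (cases "\<exists>p\<in>C. a \<bullet> p = b") (auto simp: less_le)
qed

lemma relatively_open_convex_hyperplane_cases:
  fixes C :: "'a::euclidean_space set"
  assumes "convex C" "rel_interior C = C"
  obtains "C \<subseteq> {x. a \<bullet> x < b}" | "C \<subseteq> {x. a \<bullet> x = b}" | "C \<subseteq> {x. a \<bullet> x > b}"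
    | p q where "p \<in> C" "a \<bullet> p < b" "q \<in> C" "a \<bullet> q > b"
proof -
  consider p q where "p \<in> C" "a \<bullet> p < b" "q \<in> C" "a \<bullet> q > b"
    | "C \<subseteq> {x. a \<bullet> x \<le> b}" | "C \<subseteq> {x. (- a) \<bullet> x \<le> - b}"
    by (metis (mono_tags, lifting) inner_minus_left mem_Collect_eq neg_le_iff_le not_less subsetI)
  then show thesis
  proof cases
    case 2
    then show thesis using relatively_open_convex_in_halfspace[OF assms] that by blast
  next
    case 3
    then have "C \<subseteq> {x. (- a) \<bullet> x < - b} \<or> C \<subseteq> {x. (- a) \<bullet> x = - b}"
      by (rule relatively_open_convex_in_halfspace[OF assms])
    then show thesis using that by force
  qed (use that in blast)
qed

lemma rel_interior_meets_hyperplane: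
  fixes P :: "'a::euclidean_space set"
  assumes "convex P" "p \<in> closure P" "q \<in> closure P" "a \<bullet> p < b" "b < a \<bullet> q"
  shows "rel_interior P \<inter> {x. a \<bullet> x = b} \<noteq> {}"
proof -
  have cl: "closure (rel_interior P) = closure P"
    by (rule convex_closure_rel_interior[OF assms(1)])
  have "{x. a \<bullet> x < b} \<inter> closure (rel_interior P) \<noteq> {}" using assms(2,4) cl by blast
  then obtain p' where p': "p' \<in> rel_interior P" "a \<bullet> p' < b"
    using open_Int_closure_eq_empty[OF open_halfspace_lt] by blast
  have "{x. a \<bullet> x > b} \<inter> closure (rel_interior P) \<noteq> {}" using assms(3,5) cl by blast
  then obtain q' where q': "q' \<in> rel_interior P" "a \<bullet> q' > b"
    using open_Int_closure_eq_empty[OF open_halfspace_gt] by blast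
  have "connected (rel_interior P)"
    by (intro convex_connected convex_rel_interior assms(1))
  then show ?thesis
    using connected_ivt_hyperplane[of "rel_interior P" p' q' a b] p' q' by force
qed

lemma convex_insert_open_halfspace: "convex (insert w {y. v \<bullet> y < v \<bullet> w})"
  unfolding convex_alt
proof (intro ballI allI impI)
  fix x y and u :: real
  assume x: "x \<in> insert w {y. v \<bullet> y < v \<bullet> w}" and y: "y \<in> insert w {y. v \<bullet> y < v \<bullet> w}"
    and u: "0 \<le> u \<and> u \<le> 1"
  let ?z = "(1 - u) *\<^sub>R x + u *\<^sub>R y"
  have vx: "x = w \<or> v \<bullet> x < v \<bullet> w" and vy: "y = w \<or> v \<bullet> y < v \<bullet> w" using x y by auto
  show "?z \<in> insert w {y. v \<bullet> y < v \<bullet> w}"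
  proof (cases "x = w \<and> y = w \<or> u = 0 \<or> u = 1")
    case True
    then show ?thesis using x y by (auto simp: scaleR_left_distrib[symmetric])
  next
    case False
    then have u01: "0 < u" "u < 1" using u by auto
    have "(1 - u) * (v \<bullet> x) + u * (v \<bullet> y) < (1 - u) * (v \<bullet> w) + u * (v \<bullet> w)"
    proof (cases "x = w")
      case True
      then have "v \<bullet> y < v \<bullet> w" using False vy by blast
      then show ?thesis using True u01 by simp
    next
      case False
      then have "v \<bullet> x < v \<bullet> w" using vx by blast
      moreover have "v \<bullet> y \<le> v \<bullet> w" using vy by auto
      ultimately show ?thesis using u01 by (intro add_less_le_mono mult_left_mono) auto
    qed
    also have "\<dots> = v \<bullet> w" by (simp add: algebra_simps)
    finally have "v \<bullet> ?z < v \<bullet> w" by (simp add: inner_simps)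
    then show ?thesis by blast
  qed
qed

lemma aff_dim_Int_hyperplane:
  fixes C :: "'a::euclidean_space set"
  assumes "convex C" "rel_interior C \<inter> {x. a \<bullet> x = b} \<noteq> {}" "\<not> C \<subseteq> {x. a \<bullet> x = b}"
  shows "aff_dim (C \<inter> {x. a \<bullet> x = b}) = aff_dim C - 1"
proof -
  let ?H = "{x. a \<bullet> x = b}"
  obtain U where U: "open U" "rel_interior C = affine hull C \<inter> U"
    using openin_rel_interior[of C, unfolded openin_open] by blast
  have "rel_interior C \<inter> ?H = affine hull C \<inter> ?H \<inter> U" using U(2) by (simp add: Int_ac)
  then have "openin (top_of_set (affine hull C \<inter> ?H)) (rel_interior C \<inter> ?H)"
    using openin_open_Int[OF U(1)] by simp
  then have "aff_dim (rel_interior C \<inter> ?H) = aff_dim (affine hull C \<inter> ?H)"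
    by (rule aff_dim_openin[OF _ affine_Int[OF affine_affine_hull affine_hyperplane] assms(2)])
  also have "\<dots> = aff_dim C - 1"
  proof -
    have "affine hull C \<inter> ?H \<noteq> {}"
      using assms(2) rel_interior_subset[of C] hull_subset[of C affine] by blast
    moreover have "\<not> affine hull C \<subseteq> ?H" using assms(3) hull_subset[of C affine] by blast
    ultimately show ?thesis using aff_dim_affine_Int_hyperplane[OF affine_affine_hull[of C], of a b]
      by simp
  qed
  also have "rel_interior C \<inter> ?H = rel_interior (C \<inter> ?H)"
    using convex_affine_rel_interior_Int[OF assms(1) affine_hyperplane assms(2)] by simp
  finally show ?thesis
    by (simp add: rel_interior_aff_dim convex_Int[OF assms(1) convex_hyperplane])
qed

lemma finite_positive_lower_bound:
  fixes f :: "'b \<Rightarrow> real"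
  assumes "finite S" "\<And>x. x \<in> S \<Longrightarrow> 0 < f x"
  obtains e where "e > 0" "\<And>x. x \<in> S \<Longrightarrow> e \<le> f x"
proof
  show "Min (insert 1 (f ` S)) > 0" using assms by simp
  show "Min (insert 1 (f ` S)) \<le> f x" if "x \<in> S" for x using assms(1) that by simp
qed

lemma inner_less_inner_self_if_norm_le:
  fixes u w :: "'a::real_inner"
  assumes "norm u \<le> norm w" "u \<noteq> w"
  shows "w \<bullet> u < w \<bullet> w"
proof -
  have "0 < (norm (w - u))\<^sup>2" using assms(2) by simp
  also have "\<dots> = w \<bullet> w - 2 * (w \<bullet> u) + u \<bullet> u"
    by (simp add: power2_norm_eq_inner inner_diff inner_commute)
  finally have "0 < w \<bullet> w - 2 * (w \<bullet> u) + u \<bullet> u" .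
  moreover have "u \<bullet> u \<le> w \<bullet> w"
    using power_mono[OF assms(1) norm_ge_zero, of 2] by (simp add: power2_norm_eq_inner)
  ultimately show ?thesis by linarith
qed

definition extreme_points :: "'a::real_vector set \<Rightarrow> 'a set" where
  "extreme_points P = {x. x extreme_point_of P}"

lemma extreme_points_subset: "extreme_points P \<subseteq> P"
  by (auto simp: extreme_points_def extreme_point_of_def)

lemma finite_extreme_points_polytope:
  fixes P :: "'a::euclidean_space set"
  shows "polytope P \<Longrightarrow> finite (extreme_points P)"
  unfolding extreme_points_def by (intro finite_polyhedron_extreme_points polytope_imp_polyhedron)

lemma polytope_eq_convex_hull_extreme_points:
  fixes P :: "'a::euclidean_space set"
  assumes "polytope P"
  shows "P = convex hull (extreme_points P)"
proof -
  obtain S where "finite S" "P = convex hull S" using assms unfolding polytope_def by blast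
  then show ?thesis unfolding extreme_points_def using Krein_Milman_polytope[of S] by simp
qed

lemma polytope_subset_convex_iff:
  fixes P :: "'a::euclidean_space set"
  assumes "polytope P" "convex T"
  shows "P \<subseteq> T \<longleftrightarrow> extreme_points P \<subseteq> T"
proof
  show "P \<subseteq> T \<Longrightarrow> extreme_points P \<subseteq> T" using extreme_points_subset by blast
  show "extreme_points P \<subseteq> T \<Longrightarrow> P \<subseteq> T"
    by (subst polytope_eq_convex_hull_extreme_points[OF assms(1)])
      (rule hull_minimal[where S=convex, OF _ assms(2)])
qed

context
  fixes P :: "'a::euclidean_space set" and w v :: 'a
  assumes polytope: "polytope P" and below: "\<forall>u\<in>extreme_points P - {w}. v \<bullet> u < v \<bullet> w"
begin

lemma polytope_subset_insert_open_halfspace: "P \<subseteq> insert w {y. v \<bullet> y < v \<bullet> w}"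
  using below by (subst polytope_subset_convex_iff[OF polytope convex_insert_open_halfspace]) blast

lemma exposed_point_extreme:
  assumes "w \<in> P"
  shows "w \<in> extreme_points P"
proof -
  have le: "\<And>x. x \<in> P \<Longrightarrow> v \<bullet> x \<le> v \<bullet> w"
    using polytope_subset_insert_open_halfspace by fastforce
  have "P \<inter> {x. v \<bullet> x = v \<bullet> w} = {w}"
    using polytope_subset_insert_open_halfspace assms by auto
  then show ?thesis
    unfolding extreme_points_def using extreme_point_of_Int_supporting_hyperplane_le[OF _ le]
      by simp
qed

end

section \<open>The open half-space transform of a family of polytopes\<close>

text \<open>Since \<open>aff_dim {} = -1\<close>, the exponent is never truncated, and \<open>dim_sign {} = 1\<close>.\<close>

definition dim_sign :: "'a::euclidean_space set \<Rightarrow> int" where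
  "dim_sign X = (-1) ^ nat (aff_dim X + 1)"

definition halfspace_transform ::
    "'a::euclidean_space set set \<Rightarrow> ('a set \<Rightarrow> int) \<Rightarrow> 'a \<Rightarrow> real \<Rightarrow> int" where
  "halfspace_transform F c v r =
     (\<Sum>P\<in>F. dim_sign P * c P * (if P \<subseteq> {y. v \<bullet> y < r} then 1 else 0))"

lemma dim_sign_aff_dim_minus_one:
  fixes X Y :: "'a::euclidean_space set"
  assumes "X \<noteq> {}" "aff_dim Y = aff_dim X - 1"
  shows "dim_sign Y = - dim_sign X"
proof -
  have "aff_dim X \<ge> 0" using assms(1) aff_dim_empty[of X] aff_dim_geq[of X] by linarith
  then have "nat (aff_dim X + 1) = Suc (nat (aff_dim Y + 1))" using assms(2) by simp
  then show ?thesis by (simp add: dim_sign_def)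
qed

lemma halfspace_transform_zero_direction:
  assumes "finite F" "{} \<in> F"
  shows "halfspace_transform F c 0 0 = c {}"
proof -
  have "halfspace_transform F c 0 0 = (\<Sum>P\<in>F. if P = {} then c P else 0)"
    unfolding halfspace_transform_def by (rule sum.cong) (auto simp: dim_sign_def)
  then show ?thesis using assms by simp
qed

lemma halfspace_transform_support:
  assumes "finite F"
  shows "halfspace_transform {P\<in>F. c P \<noteq> 0} c v r = halfspace_transform F c v r"
  unfolding halfspace_transform_def using assms
  by (intro sum.mono_neutral_left) auto

text \<open>
  Tilting \<open>v\<close> slightly against \<open>v0\<close> breaks every tie with \<open>w\<close>, so that \<open>w\<close> is the only point
  of \<open>V\<close> that changes side between the thresholds \<open>t\<close> and \<open>t'\<close>.
\<close>

lemma exists_tilted_direction: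
  fixes V :: "'a::euclidean_space set"
  assumes "finite V" "\<forall>u\<in>V - {w}. v0 \<bullet> u < v0 \<bullet> w"
  obtains v' t t' where
    "\<forall>u\<in>V. (v' \<bullet> u < t' \<longleftrightarrow> u = w \<or> v \<bullet> u < v \<bullet> w) \<and> (v' \<bullet> u < t \<longleftrightarrow> u \<noteq> w \<and> v \<bullet> u < v \<bullet> w)"
proof -
  define h where "h u = v0 \<bullet> w - v0 \<bullet> u" for u
  have h: "h u > 0" if "u \<in> V - {w}" for u using assms(2) that by (simp add: h_def)
  obtain \<epsilon> where \<epsilon>: "\<epsilon> > 0"
    and \<epsilon>_le: "\<And>u. u \<in> {u\<in>V - {w}. v \<bullet> u < v \<bullet> w} \<Longrightarrow> \<epsilon> \<le> (v \<bullet> w - v \<bullet> u) / (2 * h u)"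
    by (rule finite_positive_lower_bound[of "{u\<in>V - {w}. v \<bullet> u < v \<bullet> w}"
          "\<lambda>u. (v \<bullet> w - v \<bullet> u) / (2 * h u)"])
      (use assms(1) h in auto)
  define v' where "v' = v - \<epsilon> *\<^sub>R v0"
  define t where "t = v' \<bullet> w"
  have diff: "v' \<bullet> u - t = (v \<bullet> u - v \<bullet> w) + \<epsilon> * h u" for u
    by (simp add: v'_def t_def h_def inner_simps algebra_simps)
  have below_t: "v' \<bullet> u < t \<longleftrightarrow> v \<bullet> u < v \<bullet> w" if u: "u \<in> V - {w}" for u
  proof
    assume "v \<bullet> u < v \<bullet> w"
    then have "\<epsilon> * (2 * h u) \<le> v \<bullet> w - v \<bullet> u"
      using \<epsilon>_le[of u] h[OF u] u by (simp add: pos_le_divide_eq)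
    moreover have "\<epsilon> * (2 * h u) = 2 * (\<epsilon> * h u)" by simp
    ultimately show "v' \<bullet> u < t" using diff[of u] mult_pos_pos[OF \<epsilon> h[OF u]] by linarith
  next
    assume "v' \<bullet> u < t"
    then show "v \<bullet> u < v \<bullet> w" using diff[of u] mult_pos_pos[OF \<epsilon> h[OF u]] by linarith
  qed
  obtain \<eta> where \<eta>: "\<eta> > 0" and \<eta>_le: "\<And>u. u \<in> {u\<in>V. t < v' \<bullet> u} \<Longrightarrow> \<eta> \<le> v' \<bullet> u - t"
    by (rule finite_positive_lower_bound[of "{u\<in>V. t < v' \<bullet> u}" "\<lambda>u. v' \<bullet> u - t"])
      (use assms(1) in auto)
  have "(v' \<bullet> u < t + \<eta> \<longleftrightarrow> u = w \<or> v \<bullet> u < v \<bullet> w) \<and> (v' \<bullet> u < t \<longleftrightarrow> u \<noteq> w \<and> v \<bullet> u < v \<bullet> w)"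
    if u: "u \<in> V" for u
  proof (cases "u = w")
    case True
    then show ?thesis using \<eta> by (simp add: t_def)
  next
    case False
    then have "v' \<bullet> u < t \<longleftrightarrow> v \<bullet> u < v \<bullet> w" using below_t u by blast
    moreover have "v' \<bullet> u \<noteq> t" using diff[of u] mult_pos_pos[OF \<epsilon> h] u False below_t by force
    moreover have "v' \<bullet> u < t + \<eta> \<longleftrightarrow> v' \<bullet> u < t" using \<eta> \<eta>_le[of u] u \<open>v' \<bullet> u \<noteq> t\<close>
      by (cases "t < v' \<bullet> u") auto
    ultimately show ?thesis using False by simp
  qed
  then show thesis using that by blast
qed

lemma polytope_halfspace_indicator_tilt:
  fixes P :: "'a::euclidean_space set"
  assumes "polytope P" "extreme_points P \<subseteq> V" "w \<in> P \<Longrightarrow> w \<in> extreme_points P"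
    and tilt: "\<forall>u\<in>V. (v' \<bullet> u < t' \<longleftrightarrow> u = w \<or> v \<bullet> u < v \<bullet> w) \<and> (v' \<bullet> u < t \<longleftrightarrow> u \<noteq> w \<and> v \<bullet> u < v \<bullet> w)"
  shows "(if P \<subseteq> {y. v' \<bullet> y < t'} then 1 else 0) - (if P \<subseteq> {y. v' \<bullet> y < t} then 1 else 0 :: int)
       = (if w \<in> P \<and> (\<forall>u\<in>extreme_points P - {w}. v \<bullet> u < v \<bullet> w) then 1 else 0)"
proof -
  have sub: "P \<subseteq> {y. v' \<bullet> y < s} \<longleftrightarrow> (\<forall>u\<in>extreme_points P. v' \<bullet> u < s)" for s
    using polytope_subset_convex_iff[OF assms(1) convex_halfspace_lt] by blast
  have "P \<subseteq> {y. v' \<bullet> y < t'} \<longleftrightarrow> (\<forall>u\<in>extreme_points P - {w}. v \<bullet> u < v \<bullet> w)"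
    using sub[of t'] tilt assms(2) by blast
  moreover have "P \<subseteq> {y. v' \<bullet> y < t} \<longleftrightarrow>
      w \<notin> extreme_points P \<and> (\<forall>u\<in>extreme_points P - {w}. v \<bullet> u < v \<bullet> w)"
    using sub[of t] tilt assms(2) by blast
  moreover have "w \<in> P \<longleftrightarrow> w \<in> extreme_points P" using assms(3) extreme_points_subset by blast
  ultimately show ?thesis by auto
qed

lemma halfspace_transform_vanishes_at_exposed_point:
  assumes fin: "finite F" and poly: "\<forall>P\<in>F. polytope P"
    and zero: "\<forall>v r. halfspace_transform F c v r = 0"
    and exposed: "\<forall>P\<in>F. \<forall>u\<in>extreme_points P - {w}. v0 \<bullet> u < v0 \<bullet> w"
  shows "(\<Sum>P\<in>F. dim_sign P * c P *
           (if w \<in> P \<and> (\<forall>u\<in>extreme_points P - {w}. v \<bullet> u < v \<bullet> w) then 1 else 0)) = 0"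
proof -
  define V where "V = \<Union>(extreme_points ` F)"
  have "finite V" unfolding V_def using fin poly finite_extreme_points_polytope by blast
  moreover have "\<forall>u\<in>V - {w}. v0 \<bullet> u < v0 \<bullet> w" using exposed unfolding V_def by blast
  ultimately obtain v' t t' where tilt:
    "\<forall>u\<in>V. (v' \<bullet> u < t' \<longleftrightarrow> u = w \<or> v \<bullet> u < v \<bullet> w) \<and> (v' \<bullet> u < t \<longleftrightarrow> u \<noteq> w \<and> v \<bullet> u < v \<bullet> w)"
    by (rule exists_tilted_direction)
  have "halfspace_transform F c v' t' - halfspace_transform F c v' t =
      (\<Sum>P\<in>F. dim_sign P * c P *
        (if w \<in> P \<and> (\<forall>u\<in>extreme_points P - {w}. v \<bullet> u < v \<bullet> w) then 1 else 0))"
    unfolding halfspace_transform_def sum_subtractf[symmetric] right_diff_distrib[symmetric]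
  proof (rule sum.cong[OF refl])
    fix P assume P: "P \<in> F"
    then have "w \<in> P \<Longrightarrow> w \<in> extreme_points P"
      using exposed_point_extreme[of P w v0] poly exposed by blast
    moreover have "extreme_points P \<subseteq> V" using P unfolding V_def by blast
    ultimately show "dim_sign P * c P *
        ((if P \<subseteq> {y. v' \<bullet> y < t'} then 1 else 0) - (if P \<subseteq> {y. v' \<bullet> y < t} then 1 else 0))
        = dim_sign P * c P * (if w \<in> P \<and> (\<forall>u\<in>extreme_points P - {w}. v \<bullet> u < v \<bullet> w) then 1 else 0)"
      using polytope_halfspace_indicator_tilt[of P V w v' t' v t] poly P tilt by simp
  qed
  then show ?thesis using zero by simp
qed

text \<open>
  Near a vertex \<open>w\<close> exposed by \<open>v0\<close>, a polytope is the cone over its slice by the hyperplane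
  \<open>v0 \<bullet> y = v0 \<bullet> w - \<delta>\<close>, which has one dimension less.
\<close>

context
  fixes P :: "'a::euclidean_space set" and w v0 :: 'a and \<delta> :: real
  assumes polytope: "polytope P" and w: "w \<in> P" and \<delta>: "\<delta> > 0"
    and below: "\<forall>u\<in>extreme_points P - {w}. v0 \<bullet> u < v0 \<bullet> w - \<delta>"
begin

lemma slice_point:
  assumes u: "u \<in> extreme_points P - {w}"
  shows "w + (\<delta> / (v0 \<bullet> w - v0 \<bullet> u)) *\<^sub>R (u - w) \<in> P \<inter> {y. v0 \<bullet> y = v0 \<bullet> w - \<delta>}"
proof -
  define s where "s = \<delta> / (v0 \<bullet> w - v0 \<bullet> u)"
  have "v0 \<bullet> u < v0 \<bullet> w - \<delta>" using below u by blast
  then have gap: "\<delta> < v0 \<bullet> w - v0 \<bullet> u" by linarith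
  then have s: "0 \<le> s" "s \<le> 1" using \<delta> by (simp_all add: s_def)
  have "u \<in> P" using u extreme_points_subset by blast
  then have "(1 - s) *\<^sub>R w + s *\<^sub>R u \<in> P"
    using convexD[OF polytope_imp_convex[OF polytope] w, of u "1 - s" s] s by simp
  moreover have "w + s *\<^sub>R (u - w) = (1 - s) *\<^sub>R w + s *\<^sub>R u" by (simp add: algebra_simps)
  moreover have "s * (v0 \<bullet> w - v0 \<bullet> u) = \<delta>" using gap \<delta> by (simp add: s_def)
  then have "v0 \<bullet> (w + s *\<^sub>R (u - w)) = v0 \<bullet> w - \<delta>" by (simp add: inner_simps algebra_simps)
  ultimately show ?thesis by (simp add: s_def)
qed

lemma extreme_point_other:
  assumes "P \<noteq> {w}"
  obtains u where "u \<in> extreme_points P - {w}"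
proof -
  have "\<not> extreme_points P \<subseteq> {w}"
  proof
    assume "extreme_points P \<subseteq> {w}"
    then have "P \<subseteq> {w}" using polytope_subset_convex_iff[OF polytope convex_singleton] by blast
    then show False using w assms by blast
  qed
  then show thesis using that by blast
qed

lemma slice_eq_empty_iff: "P \<inter> {y. v0 \<bullet> y = v0 \<bullet> w - \<delta>} = {} \<longleftrightarrow> P = {w}"
proof
  assume empty: "P \<inter> {y. v0 \<bullet> y = v0 \<bullet> w - \<delta>} = {}"
  show "P = {w}"
  proof (rule ccontr)
    assume "P \<noteq> {w}"
    then obtain u where "u \<in> extreme_points P - {w}" by (rule extreme_point_other)
    then show False using slice_point empty by blast
  qed
qed (use \<delta> in auto)

lemma rel_interior_meets_slice:
  assumes "P \<noteq> {w}"
  shows "rel_interior P \<inter> {y. v0 \<bullet> y = v0 \<bullet> w - \<delta>} \<noteq> {}"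
proof -
  obtain u where u: "u \<in> extreme_points P - {w}" using assms by (rule extreme_point_other)
  have "u \<in> closure P" "w \<in> closure P"
    using u w extreme_points_subset closure_subset by blast+
  moreover have "v0 \<bullet> u < v0 \<bullet> w - \<delta>" using u below by blast
  ultimately show ?thesis
    using rel_interior_meets_hyperplane[OF polytope_imp_convex[OF polytope]] \<delta> by simp
qed

lemma rel_interior_slice:
  assumes "P \<noteq> {w}"
  shows "rel_interior (P \<inter> {y. v0 \<bullet> y = v0 \<bullet> w - \<delta>}) = rel_interior P \<inter> {y. v0 \<bullet> y = v0 \<bullet> w - \<delta>}"
  using convex_affine_rel_interior_Int[OF polytope_imp_convex[OF polytope] affine_hyperplane
      rel_interior_meets_slice[OF assms]] .

lemma aff_dim_slice:
  assumes "P \<noteq> {w}"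
  shows "aff_dim (P \<inter> {y. v0 \<bullet> y = v0 \<bullet> w - \<delta>}) = aff_dim P - 1"
proof -
  have "\<not> P \<subseteq> {y. v0 \<bullet> y = v0 \<bullet> w - \<delta>}" using w \<delta> by auto
  then show ?thesis
    using aff_dim_Int_hyperplane[OF polytope_imp_convex[OF polytope]
        rel_interior_meets_slice[OF assms]]
    by blast
qed

lemma dim_sign_slice: "dim_sign (P \<inter> {y. v0 \<bullet> y = v0 \<bullet> w - \<delta>}) = - dim_sign P"
proof (cases "P = {w}")
  case True
  then have "P \<inter> {y. v0 \<bullet> y = v0 \<bullet> w - \<delta>} = {}" using slice_eq_empty_iff by blast
  then show ?thesis using True by (simp add: dim_sign_def)
next
  case False
  then show ?thesis using dim_sign_aff_dim_minus_one aff_dim_slice w by blast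
qed

lemma polytope_slice: "polytope (P \<inter> {y. v0 \<bullet> y = v0 \<bullet> w - \<delta>})"
  by (rule polytope_Int_polyhedron[OF polytope polyhedron_hyperplane])

lemma aff_dim_slice_less: "aff_dim (P \<inter> {y. v0 \<bullet> y = v0 \<bullet> w - \<delta>}) < aff_dim P"
proof (cases "P = {w}")
  case True
  then have "P \<inter> {y. v0 \<bullet> y = v0 \<bullet> w - \<delta>} = {}" using slice_eq_empty_iff by blast
  then show ?thesis using True by simp
qed (simp add: aff_dim_slice)

lemma slice_subset_halfspace_iff:
  "P \<inter> {y. v0 \<bullet> y = v0 \<bullet> w - \<delta>} \<subseteq> {y. v \<bullet> y < r} \<longleftrightarrow>
   (\<forall>u\<in>extreme_points P - {w}.
      (v + ((r - v \<bullet> w) / \<delta>) *\<^sub>R v0) \<bullet> u < (v + ((r - v \<bullet> w) / \<delta>) *\<^sub>R v0) \<bullet> w)"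
proof -
  define scale where "scale = (r - v \<bullet> w) / \<delta>"
  define vs where "vs = v + scale *\<^sub>R v0"
  have on_slice: "vs \<bullet> y - vs \<bullet> w = v \<bullet> y - r" if "v0 \<bullet> y = v0 \<bullet> w - \<delta>" for y
  proof -
    have "vs \<bullet> y - vs \<bullet> w = v \<bullet> y - v \<bullet> w + scale * (v0 \<bullet> y - v0 \<bullet> w)"
      by (simp add: vs_def inner_simps algebra_simps)
    also have "scale * (v0 \<bullet> y - v0 \<bullet> w) = v \<bullet> w - r" using that \<delta> by (simp add: scale_def)
    finally show ?thesis by simp
  qed
  show ?thesis unfolding scale_def[symmetric] vs_def[symmetric]
  proof
    assume "\<forall>u\<in>extreme_points P - {w}. vs \<bullet> u < vs \<bullet> w"
    then have P: "P \<subseteq> insert w {y. vs \<bullet> y < vs \<bullet> w}"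
      by (rule polytope_subset_insert_open_halfspace[OF polytope])
    show "P \<inter> {y. v0 \<bullet> y = v0 \<bullet> w - \<delta>} \<subseteq> {y. v \<bullet> y < r}"
    proof
      fix y assume y: "y \<in> P \<inter> {y. v0 \<bullet> y = v0 \<bullet> w - \<delta>}"
      then have "y \<noteq> w" using \<delta> by auto
      then have "vs \<bullet> y < vs \<bullet> w" using P y by blast
      then show "y \<in> {y. v \<bullet> y < r}" using on_slice y by force
    qed
  next
    assume H: "P \<inter> {y. v0 \<bullet> y = v0 \<bullet> w - \<delta>} \<subseteq> {y. v \<bullet> y < r}"
    show "\<forall>u\<in>extreme_points P - {w}. vs \<bullet> u < vs \<bullet> w"
    proof
      fix u assume u: "u \<in> extreme_points P - {w}"
      define s where "s = \<delta> / (v0 \<bullet> w - v0 \<bullet> u)"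
      have "s > 0" using below u \<delta> by (force simp: s_def)
      have m: "w + s *\<^sub>R (u - w) \<in> P \<inter> {y. v0 \<bullet> y = v0 \<bullet> w - \<delta>}"
        using slice_point[OF u] by (simp add: s_def)
      then have "vs \<bullet> (w + s *\<^sub>R (u - w)) - vs \<bullet> w < 0" using H on_slice by force
      then have "s * (vs \<bullet> u - vs \<bullet> w) < 0" by (simp add: inner_simps algebra_simps)
      then show "vs \<bullet> u < vs \<bullet> w" using \<open>s > 0\<close> by (simp add: mult_less_0_iff)
    qed
  qed
qed

end

lemma slices_of_family:
  fixes G :: "'a::euclidean_space set set"
  assumes G: "\<forall>P\<in>G. polytope P \<and> w \<in> P \<and> (\<forall>u\<in>extreme_points P - {w}. v0 \<bullet> u < v0 \<bullet> w - \<delta>)"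
    and "\<delta> > 0" and disj: "disjoint_family_on rel_interior G"
  shows "inj_on (\<lambda>P. P \<inter> {y. v0 \<bullet> y = v0 \<bullet> w - \<delta>}) G"
    and "disjoint_family_on rel_interior ((\<lambda>P. P \<inter> {y. v0 \<bullet> y = v0 \<bullet> w - \<delta>}) ` G)"
proof -
  let ?A = "{y. v0 \<bullet> y = v0 \<bullet> w - \<delta>}"
  have empty: "P \<inter> ?A = {} \<longleftrightarrow> P = {w}" if "P \<in> G" for P
    using slice_eq_empty_iff G that \<open>\<delta> > 0\<close> by blast
  have ri: "rel_interior (P \<inter> ?A) = rel_interior P \<inter> ?A" if "P \<in> G" "P \<noteq> {w}" for P
    using rel_interior_slice G that \<open>\<delta> > 0\<close> by blast
  have meets: "rel_interior P \<inter> ?A \<noteq> {}" if "P \<in> G" "P \<noteq> {w}" for P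
    using rel_interior_meets_slice G that \<open>\<delta> > 0\<close> by blast
  have ri_disj: "rel_interior P1 \<inter> rel_interior P2 = {}" if "P1 \<in> G" "P2 \<in> G" "P1 \<noteq> P2" for P1 P2
    using disj that unfolding disjoint_family_on_def by blast
  show "inj_on (\<lambda>P. P \<inter> ?A) G"
  proof (rule inj_onI)
    fix P1 P2 assume P: "P1 \<in> G" "P2 \<in> G" and eq: "P1 \<inter> ?A = P2 \<inter> ?A"
    show "P1 = P2"
    proof (cases "P1 = {w} \<or> P2 = {w}")
      case True
      then show ?thesis using empty[OF P(1)] empty[OF P(2)] eq by blast
    next
      case False
      then have "rel_interior P1 \<inter> ?A = rel_interior P2 \<inter> ?A" using ri P eq by metis
      then show ?thesis using meets[of P1] ri_disj P False by blast
    qed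
  qed
  show "disjoint_family_on rel_interior ((\<lambda>P. P \<inter> ?A) ` G)"
    unfolding disjoint_family_on_def
  proof (intro ballI impI)
    fix Q1 Q2 assume "Q1 \<in> (\<lambda>P. P \<inter> ?A) ` G" "Q2 \<in> (\<lambda>P. P \<inter> ?A) ` G" "Q1 \<noteq> Q2"
    then obtain P1 P2 where P: "P1 \<in> G" "P2 \<in> G" "P1 \<noteq> P2" "Q1 = P1 \<inter> ?A" "Q2 = P2 \<inter> ?A"
      by blast
    show "rel_interior Q1 \<inter> rel_interior Q2 = {}"
    proof (cases "P1 = {w} \<or> P2 = {w}")
      case True
      then have "Q1 = {} \<or> Q2 = {}" using empty P by blast
      then show ?thesis by auto
    next
      case False
      then show ?thesis using ri[of P1] ri[of P2] ri_disj[of P1 P2] P by auto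
    qed
  qed
qed

lemma halfspace_transform_slices:
  fixes F :: "'a::euclidean_space set set" and c :: "'a set \<Rightarrow> int"
    and w v0 v :: 'a and \<delta> r :: real
  defines "G \<equiv> {P\<in>F. w \<in> P}" and "A \<equiv> {y. v0 \<bullet> y = v0 \<bullet> w - \<delta>}"
    and "vs \<equiv> v + ((r - v \<bullet> w) / \<delta>) *\<^sub>R v0"
  assumes "finite F"
    and below: "\<forall>P\<in>G. polytope P \<and> (\<forall>u\<in>extreme_points P - {w}. v0 \<bullet> u < v0 \<bullet> w - \<delta>)"
    and \<delta>: "\<delta> > 0" and inj: "inj_on (\<lambda>P. P \<inter> A) G"
  shows "halfspace_transform ((\<lambda>P. P \<inter> A) ` G) (c \<circ> the_inv_into G (\<lambda>P. P \<inter> A)) v r =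
    - (\<Sum>P\<in>F. dim_sign P * c P *
         (if w \<in> P \<and> (\<forall>u\<in>extreme_points P - {w}. vs \<bullet> u < vs \<bullet> w) then 1 else 0))"
proof -
  have "halfspace_transform ((\<lambda>P. P \<inter> A) ` G) (c \<circ> the_inv_into G (\<lambda>P. P \<inter> A)) v r =
    - (\<Sum>P\<in>G. dim_sign P * c P *
         (if w \<in> P \<and> (\<forall>u\<in>extreme_points P - {w}. vs \<bullet> u < vs \<bullet> w) then 1 else 0))"
    unfolding halfspace_transform_def sum.reindex[OF inj] sum_negf[symmetric]
  proof (rule sum.cong[OF refl])
    fix P assume P: "P \<in> G"
    then have "w \<in> P" by (simp add: G_def)
    then show "((\<lambda>Q. dim_sign Q * (c \<circ> the_inv_into G (\<lambda>P. P \<inter> A)) Q *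
        (if Q \<subseteq> {y. v \<bullet> y < r} then 1 else 0)) \<circ> (\<lambda>P. P \<inter> A)) P =
      - (dim_sign P * c P *
         (if w \<in> P \<and> (\<forall>u\<in>extreme_points P - {w}. vs \<bullet> u < vs \<bullet> w) then 1 else 0))"
      using the_inv_into_f_f[OF inj P] dim_sign_slice[of P w \<delta> v0]
        slice_subset_halfspace_iff[of P w \<delta> v0 v r]
        below P \<delta> by (simp add: A_def vs_def)
  qed
  also have "(\<Sum>P\<in>G. dim_sign P * c P *
         (if w \<in> P \<and> (\<forall>u\<in>extreme_points P - {w}. vs \<bullet> u < vs \<bullet> w) then 1 else 0)) =
      (\<Sum>P\<in>F. dim_sign P * c P *
         (if w \<in> P \<and> (\<forall>u\<in>extreme_points P - {w}. vs \<bullet> u < vs \<bullet> w) then 1 else 0))"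
    using \<open>finite F\<close> unfolding G_def by (intro sum.mono_neutral_left) auto
  finally show ?thesis .
qed

lemma exists_exposed_point_with_gap:
  fixes V :: "'a::real_inner set"
  assumes "finite V" "V \<noteq> {}"
  obtains w \<delta> where "w \<in> V" "\<delta> > 0" "\<forall>u\<in>V - {w}. w \<bullet> u < w \<bullet> w - \<delta>"
proof -
  have "Max (norm ` V) \<in> norm ` V" using assms by simp
  then obtain w where w: "w \<in> V" "Max (norm ` V) = norm w" by (rule imageE)
  have exposed: "w \<bullet> u < w \<bullet> w" if "u \<in> V - {w}" for u
    using inner_less_inner_self_if_norm_le[of u w] Max_ge[of "norm ` V" "norm u"] assms(1) w that
      by auto
  obtain \<delta> where \<delta>: "\<delta> > 0" and \<delta>_le: "\<And>u. u \<in> V - {w} \<Longrightarrow> \<delta> \<le> (w \<bullet> w - w \<bullet> u) / 2"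
    by (rule finite_positive_lower_bound[of "V - {w}" "\<lambda>u. (w \<bullet> w - w \<bullet> u) / 2"])
      (use assms(1) exposed in auto)
  have "w \<bullet> u < w \<bullet> w - \<delta>" if "u \<in> V - {w}" for u
    using exposed[OF that] \<delta>_le[OF that] by (simp add: field_simps)
  with w(1) \<delta> show thesis by (intro that) auto
qed

lemma exists_exposed_vertex:
  fixes F :: "'a::euclidean_space set set"
  assumes fin: "finite F" and poly: "\<forall>P\<in>F. polytope P" and "\<exists>P\<in>F. P \<noteq> {}"
  obtains w \<delta> where "\<delta> > 0" "\<exists>P\<in>F. w \<in> extreme_points P"
    "\<forall>P\<in>F. \<forall>u\<in>extreme_points P - {w}. w \<bullet> u < w \<bullet> w - \<delta>"
proof -
  define V where "V = \<Union>(extreme_points ` F)"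
  have "finite V" unfolding V_def using fin poly finite_extreme_points_polytope by blast
  moreover have "V \<noteq> {}"
  proof -
    obtain P where P: "P \<in> F" "P \<noteq> {}" using assms(3) by blast
    then have "extreme_points P \<noteq> {}" using poly polytope_eq_convex_hull_extreme_points[of P]
      by force
    then show ?thesis using P(1) unfolding V_def by blast
  qed
  ultimately obtain w \<delta> where "w \<in> V" "\<delta> > 0" "\<forall>u\<in>V - {w}. w \<bullet> u < w \<bullet> w - \<delta>"
    by (rule exists_exposed_point_with_gap)
  then show thesis using that unfolding V_def by blast
qed

lemma halfspace_transform_nonzero_empty_step:
  fixes F :: "'a::euclidean_space set set" and c :: "'a set \<Rightarrow> int"
  assumes IH: "\<And>(F' :: 'a set set) (c' :: 'a set \<Rightarrow> int). finite F' \<Longrightarrow> \<forall>P\<in>F'. polytope P \<Longrightarrow>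
        disjoint_family_on rel_interior F' \<Longrightarrow> \<forall>v r. halfspace_transform F' c' v r = 0 \<Longrightarrow>
        \<forall>P\<in>F'. aff_dim P < int n \<Longrightarrow> \<forall>P\<in>F'. c' P = 0"
    and fin: "finite F" and poly: "\<forall>P\<in>F. polytope P" and disj: "disjoint_family_on rel_interior F"
    and zero: "\<forall>v r. halfspace_transform F c v r = 0" and dim: "\<forall>P\<in>F. aff_dim P < int (Suc n)"
    and nonzero: "\<forall>P\<in>F. c P \<noteq> 0"
  shows "\<forall>P\<in>F. P = {}"
proof (rule ccontr)
  assume "\<not> (\<forall>P\<in>F. P = {})"
  then have "\<exists>P\<in>F. P \<noteq> {}" by blast
  then obtain w \<delta> where \<delta>: "\<delta> > 0" and w: "\<exists>P\<in>F. w \<in> extreme_points P"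
    and gap: "\<forall>P\<in>F. \<forall>u\<in>extreme_points P - {w}. w \<bullet> u < w \<bullet> w - \<delta>"
    by (rule exists_exposed_vertex[OF fin poly])
  let ?A = "{y. w \<bullet> y = w \<bullet> w - \<delta>}"
  let ?G = "{Q\<in>F. w \<in> Q}"
  have below: "\<forall>Q\<in>?G. polytope Q \<and> (\<forall>u\<in>extreme_points Q - {w}. w \<bullet> u < w \<bullet> w - \<delta>)"
    using poly gap by blast
  then have G: "\<forall>Q\<in>?G. polytope Q \<and> w \<in> Q \<and> (\<forall>u\<in>extreme_points Q - {w}. w \<bullet> u < w \<bullet> w - \<delta>)"
    by blast
  have "disjoint_family_on rel_interior ?G" using disj unfolding disjoint_family_on_def by blast
  note slices = slices_of_family[OF G \<delta> this]
  have slice: "polytope (Q \<inter> ?A) \<and> aff_dim (Q \<inter> ?A) < aff_dim Q" if "Q \<in> ?G" for Q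
    using polytope_slice[of Q w \<delta> w] aff_dim_slice_less[of Q w \<delta> w] below that \<delta> by simp
  have "\<forall>Q'\<in>(\<lambda>Q. Q \<inter> ?A) ` ?G. (c \<circ> the_inv_into ?G (\<lambda>Q. Q \<inter> ?A)) Q' = 0"
  proof (rule IH)
    show "finite ((\<lambda>Q. Q \<inter> ?A) ` ?G)" using fin by simp
    show "\<forall>Q'\<in>(\<lambda>Q. Q \<inter> ?A) ` ?G. polytope Q'" using slice by blast
    show "disjoint_family_on rel_interior ((\<lambda>Q. Q \<inter> ?A) ` ?G)" by (rule slices(2))
    show "\<forall>Q'\<in>(\<lambda>Q. Q \<inter> ?A) ` ?G. aff_dim Q' < int n"
    proof
      fix Q' assume "Q' \<in> (\<lambda>Q. Q \<inter> ?A) ` ?G"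
      then obtain Q where Q: "Q \<in> ?G" "Q' = Q \<inter> ?A" by blast
      then have "aff_dim Q' < aff_dim Q" "aff_dim Q < int (Suc n)" using slice dim by auto
      then show "aff_dim Q' < int n" by simp
    qed
    have "\<forall>P\<in>F. \<forall>u\<in>extreme_points P - {w}. w \<bullet> u < w \<bullet> w"
    proof (intro ballI)
      fix P u assume "P \<in> F" "u \<in> extreme_points P - {w}"
      then have "w \<bullet> u < w \<bullet> w - \<delta>" using gap by blast
      then show "w \<bullet> u < w \<bullet> w" using \<delta> by linarith
    qed
    note vertex = halfspace_transform_vanishes_at_exposed_point[OF fin poly zero this]
    show "\<forall>v r. halfspace_transform ((\<lambda>Q. Q \<inter> ?A) ` ?G) (c \<circ> the_inv_into ?G (\<lambda>Q. Q \<inter> ?A)) v r = 0"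
      unfolding halfspace_transform_slices[OF fin below \<delta> slices(1)] vertex by simp
  qed
  moreover obtain Q where "Q \<in> F" "w \<in> extreme_points Q" using w by blast
  then have Q: "Q \<in> ?G" using extreme_points_subset by blast
  ultimately have "(c \<circ> the_inv_into ?G (\<lambda>Q. Q \<inter> ?A)) (Q \<inter> ?A) = 0" by blast
  then have "c Q = 0" using the_inv_into_f_f[OF slices(1) Q] by simp
  then show False using Q nonzero by blast
qed

lemma halfspace_transform_injective_dim:
  fixes F :: "'a::euclidean_space set set" and c :: "'a set \<Rightarrow> int"
  assumes "finite F" "\<forall>P\<in>F. polytope P" "disjoint_family_on rel_interior F"
    "\<forall>v r. halfspace_transform F c v r = 0" "\<forall>P\<in>F. aff_dim P < int n"
  shows "\<forall>P\<in>F. c P = 0"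
  using assms
proof (induction n arbitrary: F c)
  case 0
  then have "\<forall>P\<in>F. P = {}" using aff_dim_negative_iff by force
  then show ?case using halfspace_transform_zero_direction "0.prems"(1,4) by metis
next
  case (Suc n)
  let ?F0 = "{P\<in>F. c P \<noteq> 0}"
  have "\<forall>P\<in>?F0. P = {}"
  proof (rule halfspace_transform_nonzero_empty_step[OF Suc.IH])
    show "finite ?F0" "\<forall>P\<in>?F0. polytope P" "\<forall>P\<in>?F0. aff_dim P < int (Suc n)" "\<forall>P\<in>?F0. c P \<noteq> 0"
      using Suc.prems by auto
    show "disjoint_family_on rel_interior ?F0"
      using Suc.prems(3) unfolding disjoint_family_on_def by blast
    show "\<forall>v r. halfspace_transform ?F0 c v r = 0"
      using Suc.prems(4) halfspace_transform_support[OF Suc.prems(1)] by simp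
  qed
  show ?case
  proof (intro ballI, rule ccontr)
    fix P assume P: "P \<in> F" "c P \<noteq> 0"
    then have "P = {}" using \<open>\<forall>P\<in>?F0. P = {}\<close> by blast
    then show False using halfspace_transform_zero_direction[OF Suc.prems(1), of c] Suc.prems(4) P
      by simp
  qed
qed

theorem halfspace_transform_injective:
  fixes F :: "'a::euclidean_space set set" and c :: "'a set \<Rightarrow> int"
  assumes "finite F" "\<forall>P\<in>F. polytope P" "disjoint_family_on rel_interior F"
    and "\<forall>v r. halfspace_transform F c v r = 0"
  shows "\<forall>P\<in>F. c P = 0"
proof (rule halfspace_transform_injective_dim[OF assms])
  show "\<forall>P\<in>F. aff_dim P < int (Suc DIM('a))"
  proof
    fix P :: "'a set"
    have "aff_dim P \<le> int DIM('a)" by (rule aff_dim_le_DIM)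
    then show "aff_dim P < int (Suc DIM('a))" by simp
  qed
qed

section \<open>Cells of hyperplane arrangements\<close>

definition open_cell :: "'a::euclidean_space set \<Rightarrow> bool" where
  "open_cell C \<longleftrightarrow> convex C \<and> rel_interior C = C \<and> C \<noteq> {} \<and> polytope (closure C)"

lemma open_cell_rel_interior_polytope:
  fixes P :: "'a::euclidean_space set"
  assumes "polytope P" "P \<noteq> {}"
  shows "open_cell (rel_interior P)"
proof -
  have cv: "convex P" using assms(1) polytope_imp_convex by blast
  have "closure P = P" using assms(1) polytope_imp_closed closure_closed by blast
  then show ?thesis
    unfolding open_cell_def
    using assms convex_rel_interior[OF cv] rel_interior_rel_interior[OF cv]
      convex_closure_rel_interior[OF cv] rel_interior_eq_empty[OF cv] by simp
qed

lemma open_cell_Int_open_halfspace: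
  fixes C :: "'a::euclidean_space set"
  assumes C: "open_cell C" and ne: "C \<inter> {x. a \<bullet> x < b} \<noteq> {}" and a: "a \<noteq> 0"
  shows "open_cell (C \<inter> {x. a \<bullet> x < b})"
    and "closure (C \<inter> {x. a \<bullet> x < b}) = closure C \<inter> {x. a \<bullet> x \<le> b}"
    and "dim_sign (C \<inter> {x. a \<bullet> x < b}) = dim_sign C"
proof -
  have cv: "convex C" and ri: "rel_interior C = C" and pc: "polytope (closure C)"
    using C by (auto simp: open_cell_def)
  have ri_H: "rel_interior {x. a \<bullet> x < b} = {x. a \<bullet> x < b}"
    by (rule rel_interior_open[OF open_halfspace_lt])
  have meet: "rel_interior C \<inter> rel_interior {x. a \<bullet> x < b} \<noteq> {}" using ne ri ri_H by simp
  show cl: "closure (C \<inter> {x. a \<bullet> x < b}) = closure C \<inter> {x. a \<bullet> x \<le> b}"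
    using closure_Int_convex[OF cv convex_halfspace_lt meet] closure_halfspace_lt[OF a] by simp
  have "rel_interior (C \<inter> {x. a \<bullet> x < b}) = C \<inter> {x. a \<bullet> x < b}"
    using convex_rel_interior_inter_two[OF cv convex_halfspace_lt meet] ri ri_H by simp
  moreover have "polytope (closure C \<inter> {x. a \<bullet> x \<le> b})"
    by (rule polytope_Int_polyhedron[OF pc polyhedron_halfspace_le])
  ultimately show "open_cell (C \<inter> {x. a \<bullet> x < b})"
    unfolding open_cell_def using cl ne convex_Int[OF cv convex_halfspace_lt] by auto
  show "dim_sign (C \<inter> {x. a \<bullet> x < b}) = dim_sign C"
    using aff_dim_convex_Int_open[OF cv open_halfspace_lt ne] by (simp add: dim_sign_def)
qed

lemma open_cell_Int_hyperplane:
  fixes C :: "'a::euclidean_space set"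
  assumes C: "open_cell C" and "p \<in> C" "a \<bullet> p < b" "q \<in> C" "b < a \<bullet> q"
  shows "open_cell (C \<inter> {x. a \<bullet> x = b})"
    and "closure (C \<inter> {x. a \<bullet> x = b}) = closure C \<inter> {x. a \<bullet> x = b}"
    and "dim_sign (C \<inter> {x. a \<bullet> x = b}) = - dim_sign C"
proof -
  have cv: "convex C" and ri: "rel_interior C = C" and pc: "polytope (closure C)"
    using C by (auto simp: open_cell_def)
  have meet: "rel_interior C \<inter> {x. a \<bullet> x = b} \<noteq> {}"
    using rel_interior_meets_hyperplane[OF cv] assms(2-5) closure_subset by blast
  show cl: "closure (C \<inter> {x. a \<bullet> x = b}) = closure C \<inter> {x. a \<bullet> x = b}"
    by (rule convex_affine_closure_Int[OF cv affine_hyperplane meet])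
  have "rel_interior (C \<inter> {x. a \<bullet> x = b}) = C \<inter> {x. a \<bullet> x = b}"
    using convex_affine_rel_interior_Int[OF cv affine_hyperplane meet] ri by simp
  moreover have "polytope (closure C \<inter> {x. a \<bullet> x = b})"
    by (rule polytope_Int_polyhedron[OF pc polyhedron_hyperplane])
  ultimately show "open_cell (C \<inter> {x. a \<bullet> x = b})"
    unfolding open_cell_def using cl meet ri convex_Int[OF cv convex_hyperplane] by auto
  have "\<not> C \<subseteq> {x. a \<bullet> x = b}" using assms(2,3) by auto
  then show "dim_sign (C \<inter> {x. a \<bullet> x = b}) = - dim_sign C"
    using dim_sign_aff_dim_minus_one aff_dim_Int_hyperplane[OF cv meet] assms(2) by blast
qed

lemma subset_open_halfspace_inclusion_exclusion:
  fixes K :: "'a::euclidean_space set"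
  assumes "convex K"
  shows "(if K \<subseteq> {y. v \<bullet> y < r} then 1 else 0 :: int) =
    (if K \<inter> {y. a \<bullet> y \<le> b} \<subseteq> {y. v \<bullet> y < r} then 1 else 0) +
    (if K \<inter> {y. a \<bullet> y \<ge> b} \<subseteq> {y. v \<bullet> y < r} then 1 else 0) -
    (if K \<inter> {y. a \<bullet> y = b} \<subseteq> {y. v \<bullet> y < r} then 1 else 0)"
proof -
  have mid: "\<not> K \<inter> {y. a \<bullet> y = b} \<subseteq> {y. v \<bullet> y < r}"
    if le: "\<not> K \<inter> {y. a \<bullet> y \<le> b} \<subseteq> {y. v \<bullet> y < r}"
      and ge: "\<not> K \<inter> {y. a \<bullet> y \<ge> b} \<subseteq> {y. v \<bullet> y < r}"
  proof -
    obtain p where p: "p \<in> K \<inter> {y. v \<bullet> y \<ge> r}" "a \<bullet> p \<le> b"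
      using le by (force simp: not_less)
    obtain q where q: "q \<in> K \<inter> {y. v \<bullet> y \<ge> r}" "b \<le> a \<bullet> q"
      using ge by (force simp: not_less)
    have "connected (K \<inter> {y. v \<bullet> y \<ge> r})"
      by (intro convex_connected convex_Int assms convex_halfspace_ge)
    then obtain m where "m \<in> K \<inter> {y. v \<bullet> y \<ge> r}" "a \<bullet> m = b"
      using connected_ivt_hyperplane[OF _ p(1) q(1) p(2) q(2)] by blast
    then show ?thesis by auto
  qed
  have "K = K \<inter> {y. a \<bullet> y \<le> b} \<union> K \<inter> {y. a \<bullet> y \<ge> b}" by auto
  then have "K \<subseteq> {y. v \<bullet> y < r} \<longleftrightarrow>
      K \<inter> {y. a \<bullet> y \<le> b} \<subseteq> {y. v \<bullet> y < r} \<and> K \<inter> {y. a \<bullet> y \<ge> b} \<subseteq> {y. v \<bullet> y < r}"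
    by blast
  moreover have "K \<inter> {y. a \<bullet> y = b} \<subseteq> K \<inter> {y. a \<bullet> y \<le> b}"
    "K \<inter> {y. a \<bullet> y = b} \<subseteq> K \<inter> {y. a \<bullet> y \<ge> b}" by auto
  ultimately show ?thesis using mid by (smt (verit) subset_trans)
qed

definition sign_cell :: "('a::real_inner \<times> real) list \<Rightarrow> 'a \<Rightarrow> 'a set" where
  "sign_cell hs x = {y. \<forall>h\<in>set hs. sgn (fst h \<bullet> y - snd h) = sgn (fst h \<bullet> x - snd h)}"

lemma sign_cell_self: "x \<in> sign_cell hs x"
  unfolding sign_cell_def by simp

lemma sign_cell_eq: "y \<in> sign_cell hs x \<Longrightarrow> sign_cell hs y = sign_cell hs x"
  unfolding sign_cell_def by auto

lemma sign_cell_Cons: "sign_cell (h # hs) x = sign_cell [h] x \<inter> sign_cell hs x"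
  unfolding sign_cell_def by auto

lemma sign_cell_mono: "set hs' \<subseteq> set hs \<Longrightarrow> sign_cell hs x \<subseteq> sign_cell hs' x"
  unfolding sign_cell_def by blast

text \<open>
  For \<open>h = (a, b)\<close>: the nonempty sets among \<open>C \<inter> {x. a \<bullet> x < b}\<close>, \<open>C \<inter> {x. a \<bullet> x = b}\<close>
  and \<open>C \<inter> {x. a \<bullet> x > b}\<close>.
\<close>

definition hyperplane_pieces :: "('a::real_inner \<times> real) \<Rightarrow> 'a set \<Rightarrow> 'a set set" where
  "hyperplane_pieces h C = (\<lambda>x. C \<inter> sign_cell [h] x) ` C"

lemma hyperplane_pieces_one_side:
  assumes "C \<noteq> {}" "\<forall>x\<in>C. sgn (a \<bullet> x - b) = s"
  shows "hyperplane_pieces (a, b) C = {C}"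
proof -
  have "C \<inter> sign_cell [(a, b)] x = C" if "x \<in> C" for x
    using assms(2) that unfolding sign_cell_def by auto
  then show ?thesis using assms(1) unfolding hyperplane_pieces_def by auto
qed

lemma hyperplane_pieces_crossing:
  fixes C :: "'a::euclidean_space set"
  assumes "convex C" "p \<in> C" "a \<bullet> p < b" "q \<in> C" "b < a \<bullet> q"
  shows "hyperplane_pieces (a, b) C =
    {C \<inter> {x. a \<bullet> x < b}, C \<inter> {x. a \<bullet> x = b}, C \<inter> {x. b < a \<bullet> x}}"
proof -
  obtain m where m: "m \<in> C" "a \<bullet> m = b"
    using connected_ivt_hyperplane[OF convex_connected[OF assms(1)] assms(2,4), of a b] assms(3,5)
    by auto
  have piece: "C \<inter> sign_cell [(a, b)] x =
      (if a \<bullet> x < b then C \<inter> {x. a \<bullet> x < b}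
       else if a \<bullet> x = b then C \<inter> {x. a \<bullet> x = b} else C \<inter> {x. b < a \<bullet> x})" for x
    unfolding sign_cell_def by (auto simp: sgn_real_def split: if_splits)
  show ?thesis
    unfolding hyperplane_pieces_def
  proof
    show "(\<lambda>x. C \<inter> sign_cell [(a, b)] x) ` C \<subseteq>
        {C \<inter> {x. a \<bullet> x < b}, C \<inter> {x. a \<bullet> x = b}, C \<inter> {x. b < a \<bullet> x}}"
      unfolding piece by auto
    show "{C \<inter> {x. a \<bullet> x < b}, C \<inter> {x. a \<bullet> x = b}, C \<inter> {x. b < a \<bullet> x}} \<subseteq>
        (\<lambda>x. C \<inter> sign_cell [(a, b)] x) ` C"
    proof -
      have "C \<inter> {x. a \<bullet> x < b} = C \<inter> sign_cell [(a, b)] p"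
        "C \<inter> {x. a \<bullet> x = b} = C \<inter> sign_cell [(a, b)] m"
        "C \<inter> {x. b < a \<bullet> x} = C \<inter> sign_cell [(a, b)] q"
        using piece[of p] piece[of m] piece[of q] assms(3,5) m(2) by simp_all
      then show ?thesis using assms(2,4) m(1) by blast
    qed
  qed
qed

lemma open_cell_hyperplane_pieces_crossing:
  fixes C :: "'a::euclidean_space set"
  assumes C: "open_cell C" and crossing: "p \<in> C" "a \<bullet> p < b" "q \<in> C" "b < a \<bullet> q"
  shows "finite (hyperplane_pieces (a, b) C) \<and>
      (\<forall>D\<in>hyperplane_pieces (a, b) C. open_cell D \<and> D \<subseteq> C) \<and>
    (\<Sum>D\<in>hyperplane_pieces (a, b) C. dim_sign D * (if closure D \<subseteq> {y. v \<bullet> y < r} then 1 else 0)) =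
      dim_sign C * (if closure C \<subseteq> {y. v \<bullet> y < r} then 1 else 0)"
proof -
  define X1 where "X1 = C \<inter> {x. a \<bullet> x < b}"
  define X2 where "X2 = C \<inter> {x. a \<bullet> x = b}"
  define X3 where "X3 = C \<inter> {x. b < a \<bullet> x}"
  have cv: "convex C" using C by (simp add: open_cell_def)
  have a: "a \<noteq> 0" using crossing by auto
  have flip: "{x. (- a) \<bullet> x < - b} = {x. b < a \<bullet> x}" "{x. (- a) \<bullet> x \<le> - b} = {x. b \<le> a \<bullet> x}"
    by auto
  have ne: "X1 \<noteq> {}" "X3 \<noteq> {}" using crossing by (auto simp: X1_def X3_def)
  note X1 = open_cell_Int_open_halfspace[OF C _ a, of b, folded X1_def, OF ne(1)]
  note X2 = open_cell_Int_hyperplane[OF C crossing, folded X2_def]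
  have "- a \<noteq> 0" using a by simp
  note X3 = open_cell_Int_open_halfspace[OF C _ this, of "- b", unfolded flip, folded X3_def,
      OF ne(2)]
  have "p \<in> X1" "p \<notin> X2" "p \<notin> X3" "X2 \<noteq> X3"
    using crossing X2(1) by (auto simp: X1_def X2_def X3_def open_cell_def)
  then have distinct: "X1 \<noteq> X2" "X1 \<noteq> X3" "X2 \<noteq> X3" by auto
  have pieces: "hyperplane_pieces (a, b) C = {X1, X2, X3}"
    unfolding X1_def X2_def X3_def by (rule hyperplane_pieces_crossing[OF cv crossing])
  have "(\<Sum>D\<in>{X1, X2, X3}. dim_sign D * (if closure D \<subseteq> {y. v \<bullet> y < r} then 1 else 0)) =
      dim_sign C * ((if closure C \<inter> {y. a \<bullet> y \<le> b} \<subseteq> {y. v \<bullet> y < r} then 1 else 0) +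
        (if closure C \<inter> {y. a \<bullet> y \<ge> b} \<subseteq> {y. v \<bullet> y < r} then 1 else 0) -
        (if closure C \<inter> {y. a \<bullet> y = b} \<subseteq> {y. v \<bullet> y < r} then 1 else 0))"
    using distinct X1(2,3) X2(2,3) X3(2,3) by (simp add: algebra_simps)
  also have "\<dots> = dim_sign C * (if closure C \<subseteq> {y. v \<bullet> y < r} then 1 else 0)"
    using subset_open_halfspace_inclusion_exclusion[OF convex_closure[OF cv], of v r a b] by simp
  finally show ?thesis
    using pieces X1(1) X2(1) X3(1) by (auto simp: X1_def X2_def X3_def)
qed

lemma open_cell_hyperplane_pieces:
  fixes C :: "'a::euclidean_space set"
  assumes C: "open_cell C"
  shows "finite (hyperplane_pieces h C)"
    and "\<forall>D\<in>hyperplane_pieces h C. open_cell D \<and> D \<subseteq> C"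
    and "(\<Sum>D\<in>hyperplane_pieces h C. dim_sign D * (if closure D \<subseteq> {y. v \<bullet> y < r} then 1 else 0)) =
         dim_sign C * (if closure C \<subseteq> {y. v \<bullet> y < r} then 1 else 0)"
proof -
  obtain a b where h: "h = (a, b)" by fastforce
  have cv: "convex C" and ri: "rel_interior C = C" and ne: "C \<noteq> {}"
    using C by (auto simp: open_cell_def)
  have "finite (hyperplane_pieces (a, b) C) \<and> (\<forall>D\<in>hyperplane_pieces (a, b) C. open_cell D \<and> D \<subseteq> C) \<and>
    (\<Sum>D\<in>hyperplane_pieces (a, b) C. dim_sign D * (if closure D \<subseteq> {y. v \<bullet> y < r} then 1 else 0)) =
         dim_sign C * (if closure C \<subseteq> {y. v \<bullet> y < r} then 1 else 0)"
  proof (cases rule: relatively_open_convex_hyperplane_cases[OF cv ri, of a b])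
    case 1
    then have "hyperplane_pieces (a, b) C = {C}"
      by (intro hyperplane_pieces_one_side[OF ne, of _ _ "-1"]) auto
    then show ?thesis using C by simp
  next
    case 2
    then have "hyperplane_pieces (a, b) C = {C}"
      by (intro hyperplane_pieces_one_side[OF ne, of _ _ 0]) auto
    then show ?thesis using C by simp
  next
    case 3
    then have "hyperplane_pieces (a, b) C = {C}"
      by (intro hyperplane_pieces_one_side[OF ne, of _ _ 1]) auto
    then show ?thesis using C by simp
  qed (rule open_cell_hyperplane_pieces_crossing[OF C])
  then show "finite (hyperplane_pieces h C)"
    and "\<forall>D\<in>hyperplane_pieces h C. open_cell D \<and> D \<subseteq> C"
    and "(\<Sum>D\<in>hyperplane_pieces h C. dim_sign D * (if closure D \<subseteq> {y. v \<bullet> y < r} then 1 else 0)) =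
         dim_sign C * (if closure C \<subseteq> {y. v \<bullet> y < r} then 1 else 0)"
    unfolding h by blast+
qed

definition cells :: "'a::euclidean_space set \<Rightarrow> ('a \<times> real) list \<Rightarrow> 'a set set" where
  "cells P hs = (\<lambda>x. rel_interior P \<inter> sign_cell hs x) ` rel_interior P"

lemma cells_Nil: "rel_interior P \<noteq> {} \<Longrightarrow> cells P [] = {rel_interior P}"
  unfolding cells_def sign_cell_def by auto

lemma cells_Cons: "cells P (h # hs) = \<Union>(hyperplane_pieces h ` cells P hs)"
proof
  show "cells P (h # hs) \<subseteq> \<Union>(hyperplane_pieces h ` cells P hs)"
  proof
    fix D assume "D \<in> cells P (h # hs)"
    then obtain x where x: "x \<in> rel_interior P" "D = rel_interior P \<inter> sign_cell (h # hs) x"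
      unfolding cells_def by blast
    let ?C = "rel_interior P \<inter> sign_cell hs x"
    have "D = ?C \<inter> sign_cell [h] x" using x(2) sign_cell_Cons by blast
    then have "D \<in> hyperplane_pieces h ?C"
      unfolding hyperplane_pieces_def using x(1) sign_cell_self by blast
    moreover have "?C \<in> cells P hs" unfolding cells_def using x(1) by blast
    ultimately show "D \<in> \<Union>(hyperplane_pieces h ` cells P hs)" by blast
  qed
  show "\<Union>(hyperplane_pieces h ` cells P hs) \<subseteq> cells P (h # hs)"
  proof
    fix D assume "D \<in> \<Union>(hyperplane_pieces h ` cells P hs)"
    then obtain x0 x where x0: "x0 \<in> rel_interior P"
      and x: "x \<in> rel_interior P \<inter> sign_cell hs x0"
      and D: "D = rel_interior P \<inter> sign_cell hs x0 \<inter> sign_cell [h] x"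
      unfolding cells_def hyperplane_pieces_def by blast
    have "sign_cell hs x = sign_cell hs x0" using x sign_cell_eq by blast
    then have "D = rel_interior P \<inter> sign_cell (h # hs) x" using D sign_cell_Cons by blast
    then show "D \<in> cells P (h # hs)" unfolding cells_def using x by blast
  qed
qed

lemma cells_disjoint:
  assumes "C1 \<in> cells P hs" "C2 \<in> cells P hs" "C1 \<noteq> C2"
  shows "C1 \<inter> C2 = {}"
proof -
  obtain x1 x2 where "C1 = rel_interior P \<inter> sign_cell hs x1" "C2 = rel_interior P \<inter> sign_cell hs x2"
    using assms(1,2) unfolding cells_def by blast
  then show ?thesis using assms(3) sign_cell_eq by blast
qed

lemma open_cell_cells:
  fixes P :: "'a::euclidean_space set"
  assumes "polytope P" "P \<noteq> {}"
  shows "finite (cells P hs) \<and> (\<forall>C\<in>cells P hs. open_cell C \<and> C \<subseteq> rel_interior P)"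
proof (induction hs)
  case Nil
  have "open_cell (rel_interior P)" by (rule open_cell_rel_interior_polytope[OF assms])
  then show ?case using cells_Nil[of P] by (simp add: open_cell_def)
next
  case (Cons h hs)
  then have "finite (\<Union>(hyperplane_pieces h ` cells P hs))"
    using open_cell_hyperplane_pieces(1)[where h=h] by (intro finite_UN_I) auto
  moreover have "open_cell D \<and> D \<subseteq> rel_interior P"
    if "C \<in> cells P hs" "D \<in> hyperplane_pieces h C" for C D
    using that Cons open_cell_hyperplane_pieces(2)[of C h] by blast
  ultimately show ?case unfolding cells_Cons by blast
qed

lemma sum_cells:
  fixes P :: "'a::euclidean_space set"
  assumes "polytope P" "P \<noteq> {}"
  shows "(\<Sum>C\<in>cells P hs. dim_sign C * (if closure C \<subseteq> {y. v \<bullet> y < r} then 1 else 0)) =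
    dim_sign P * (if P \<subseteq> {y. v \<bullet> y < r} then 1 else 0)"
proof (induction hs)
  case Nil
  have cv: "convex P" using assms(1) polytope_imp_convex by blast
  have "rel_interior P \<noteq> {}" using assms(2) rel_interior_eq_empty[OF cv] by simp
  moreover have "closure (rel_interior P) = P"
    using convex_closure_rel_interior[OF cv] assms(1) polytope_imp_closed closure_closed by metis
  moreover have "dim_sign (rel_interior P) = dim_sign P"
    by (simp add: dim_sign_def rel_interior_aff_dim[OF cv])
  ultimately show ?case by (simp add: cells_Nil)
next
  case (Cons h hs)
  have cs: "finite (cells P hs)" "\<forall>C\<in>cells P hs. open_cell C"
    using open_cell_cells[OF assms] by blast+
  have disj: "\<forall>C1\<in>cells P hs. \<forall>C2\<in>cells P hs. C1 \<noteq> C2 \<longrightarrow>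
      hyperplane_pieces h C1 \<inter> hyperplane_pieces h C2 = {}"
  proof (intro ballI impI)
    fix C1 C2 assume C: "C1 \<in> cells P hs" "C2 \<in> cells P hs" "C1 \<noteq> C2"
    have pieces: "\<forall>D\<in>hyperplane_pieces h Ci. open_cell D \<and> D \<subseteq> Ci" if "Ci \<in> cells P hs" for Ci
      using open_cell_hyperplane_pieces(2) cs(2) that by blast
    show "hyperplane_pieces h C1 \<inter> hyperplane_pieces h C2 = {}"
    proof (rule equals0I)
      fix D assume D: "D \<in> hyperplane_pieces h C1 \<inter> hyperplane_pieces h C2"
      then have "D \<subseteq> C1 \<inter> C2" "D \<noteq> {}"
        using pieces[OF C(1)] pieces[OF C(2)] by (auto simp: open_cell_def)
      then show False using cells_disjoint[OF C] by blast
    qed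
  qed
  have "(\<Sum>D\<in>cells P (h # hs). dim_sign D * (if closure D \<subseteq> {y. v \<bullet> y < r} then 1 else 0)) =
      (\<Sum>C\<in>cells P hs. \<Sum>D\<in>hyperplane_pieces h C.
          dim_sign D * (if closure D \<subseteq> {y. v \<bullet> y < r} then 1 else 0))"
    unfolding cells_Cons
    by (rule sum.UNION_disjoint[OF cs(1) _ disj])
      (use cs(2) open_cell_hyperplane_pieces(1)[where h=h] in blast)
  also have "\<dots> = (\<Sum>C\<in>cells P hs. dim_sign C * (if closure C \<subseteq> {y. v \<bullet> y < r} then 1 else 0))"
    using cs(2) open_cell_hyperplane_pieces(3)[where h=h and v=v and r=r]
      by (intro sum.cong) simp_all
  finally show ?case using Cons.IH by simp
qed

lemma polytope_explicit_hyperplanes: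
  fixes P :: "'a::euclidean_space set"
  assumes "polytope P"
  obtains H E :: "('a \<times> real) set" where "finite H" "finite E"
    "affine hull P = {x. \<forall>h\<in>E. fst h \<bullet> x = snd h}"
    "rel_interior P = {x \<in> affine hull P. \<forall>h\<in>H. fst h \<bullet> x < snd h}"
proof -
  obtain F where F: "finite F" "P = affine hull P \<inter> \<Inter>F"
    "\<forall>h\<in>F. \<exists>a b. a \<noteq> 0 \<and> h = {x. a \<bullet> x \<le> b}" "\<forall>F'. F' \<subset> F \<longrightarrow> P \<subset> affine hull P \<inter> \<Inter>F'"
    using polyhedron_Int_affine_minimal[THEN iffD1, OF polytope_imp_polyhedron[OF assms]] by blast
  have "\<forall>h\<in>F. \<exists>ab. fst ab \<noteq> 0 \<and> h = {x. fst ab \<bullet> x \<le> snd ab}"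
  proof
    fix h assume "h \<in> F"
    then obtain a b where "a \<noteq> 0" "h = {x. a \<bullet> x \<le> b}" using F(3) by blast
    then show "\<exists>ab. fst ab \<noteq> 0 \<and> h = {x. fst ab \<bullet> x \<le> snd ab}" by (intro exI[of _ "(a, b)"]) simp
  qed
  from bchoice[OF this] obtain f
    where f: "\<forall>h\<in>F. fst (f h) \<noteq> 0 \<and> h = {x. fst (f h) \<bullet> x \<le> snd (f h)}" by blast
  have faces: "\<And>h. h \<in> F \<Longrightarrow> fst (f h) \<noteq> 0 \<and> h = {x. fst (f h) \<bullet> x \<le> snd (f h)}"
    using f by blast
  have minimal: "\<And>F'. F' \<subset> F \<Longrightarrow> P \<subset> affine hull P \<inter> \<Inter>F'" by (simp add: F(4))
  have ri: "rel_interior P = {x \<in> P. \<forall>h\<in>F. fst (f h) \<bullet> x < snd (f h)}"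
    by (rule rel_interior_polyhedron_explicit[OF F(1,2) faces minimal])
  obtain E where E: "finite E" "affine hull P = \<Inter>E"
    "\<And>h. h \<in> E \<Longrightarrow> \<exists>a b. a \<noteq> 0 \<and> h = {x. a \<bullet> x = b}"
    by (rule affine_hull_finite_intersection_hyperplanes[of P]) (rule that)
  have "\<forall>h\<in>E. \<exists>ab. h = {x. fst ab \<bullet> x = snd ab}"
  proof
    fix h assume "h \<in> E"
    then obtain a b where "h = {x. a \<bullet> x = b}" using E(3) by blast
    then show "\<exists>ab. h = {x. fst ab \<bullet> x = snd ab}" by (intro exI[of _ "(a, b)"]) simp
  qed
  from bchoice[OF this] obtain g where g: "\<forall>h\<in>E. h = {x. fst (g h) \<bullet> x = snd (g h)}" ..
  show thesis
  proof
    show "finite (f ` F)" "finite (g ` E)" using F(1) E(1) by simp_all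
    show "affine hull P = {x. \<forall>h\<in>g ` E. fst h \<bullet> x = snd h}" using E(2) g by blast
    have "x \<in> P" if "x \<in> affine hull P" "\<forall>h\<in>F. fst (f h) \<bullet> x < snd (f h)" for x
      using that f F(2) by fastforce
    then show "rel_interior P = {x \<in> affine hull P. \<forall>h\<in>f ` F. fst h \<bullet> x < snd h}"
      unfolding ri using hull_subset[of P affine] by blast
  qed
qed

lemma polytope_refining_arrangement:
  fixes P :: "'a::euclidean_space set"
  assumes "polytope P"
  obtains hs where "\<And>x. x \<in> rel_interior P \<Longrightarrow> sign_cell hs x \<subseteq> rel_interior P"
proof -
  obtain H E where HE: "finite H" "finite E" "affine hull P = {x. \<forall>h\<in>E. fst h \<bullet> x = snd h}"
    "rel_interior P = {x \<in> affine hull P. \<forall>h\<in>H. fst h \<bullet> x < snd h}"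
    using polytope_explicit_hyperplanes[OF assms] by blast
  obtain hs where hs: "set hs = H \<union> E" using finite_list[of "H \<union> E"] HE(1,2) by blast
  show thesis
  proof (rule that, rule subsetI)
    fix x y assume x: "x \<in> rel_interior P" and y: "y \<in> sign_cell hs x"
    have same_sign: "sgn (fst h \<bullet> y - snd h) = sgn (fst h \<bullet> x - snd h)" if "h \<in> H \<union> E" for h
      using y that hs unfolding sign_cell_def by blast
    have "fst h \<bullet> y = snd h" if "h \<in> E" for h
      using same_sign[of h] that x HE(3,4) by (simp add: sgn_eq_0_iff)
    moreover have "fst h \<bullet> y < snd h" if h: "h \<in> H" for h
    proof -
      have "fst h \<bullet> x < snd h" using x h HE(4) by blast
      then show ?thesis using same_sign[of h] h by (simp add: sgn_real_def split: if_splits)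
    qed
    ultimately show "y \<in> rel_interior P" using HE(3,4) by blast
  qed
qed

lemma common_refining_arrangement:
  fixes P :: "'i \<Rightarrow> 'a::euclidean_space set"
  assumes "finite I" "\<And>i. i \<in> I \<Longrightarrow> polytope (P i)"
  obtains hs where "\<And>i x. i \<in> I \<Longrightarrow> x \<in> rel_interior (P i) \<Longrightarrow> sign_cell hs x \<subseteq> rel_interior (P i)"
proof -
  have "\<forall>i\<in>I. \<exists>hs. \<forall>x\<in>rel_interior (P i). sign_cell hs x \<subseteq> rel_interior (P i)"
    using polytope_refining_arrangement assms(2) by metis
  then obtain H where H:
      "\<And>i x. i \<in> I \<Longrightarrow> x \<in> rel_interior (P i) \<Longrightarrow> sign_cell (H i) x \<subseteq> rel_interior (P i)"
    by metis
  obtain hs where hs: "set hs = (\<Union>i\<in>I. set (H i))"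
    using finite_list[of "\<Union>i\<in>I. set (H i)"] assms(1) by blast
  show thesis
  proof (rule that)
    fix i x assume "i \<in> I" "x \<in> rel_interior (P i)"
    then show "sign_cell hs x \<subseteq> rel_interior (P i)"
      using sign_cell_mono[of "H i" hs x] H hs by blast
  qed
qed

lemma cells_refined:
  assumes "\<And>x. x \<in> rel_interior P \<Longrightarrow> sign_cell hs x \<subseteq> rel_interior P"
  shows "cells P hs = sign_cell hs ` rel_interior P"
  unfolding cells_def using assms by (intro image_cong) auto

lemma refined_cells_eq:
  assumes "\<And>i x. i \<in> I \<Longrightarrow> x \<in> rel_interior (P i) \<Longrightarrow> sign_cell hs x \<subseteq> rel_interior (P i)"
  shows "sign_cell hs ` (\<Union>i\<in>I. rel_interior (P i)) = (\<Union>i\<in>I. cells (P i) hs)"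
  unfolding image_UN by (rule SUP_cong[OF refl]) (simp add: assms cells_refined)

lemma sign_cells_disjoint: "pairwise disjnt (sign_cell hs ` X)"
proof (rule pairwiseI)
  fix C1 C2 assume "C1 \<in> sign_cell hs ` X" "C2 \<in> sign_cell hs ` X" "C1 \<noteq> C2"
  then show "disjnt C1 C2" unfolding disjnt_def using sign_cell_eq by blast
qed

lemma halfspace_sum_eq_sum_over_cells:
  fixes P :: "'i \<Rightarrow> 'a::euclidean_space set" and c :: "'i \<Rightarrow> int"
  assumes fin: "finite I" and poly: "\<And>i. i \<in> I \<Longrightarrow> polytope (P i)" and ne: "\<And>i. i \<in> I \<Longrightarrow> P i \<noteq> {}"
    and refined: "\<And>i x. i \<in> I \<Longrightarrow> x \<in> rel_interior (P i) \<Longrightarrow> sign_cell hs x \<subseteq> rel_interior (P i)"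
  shows "(\<Sum>i\<in>I. c i * dim_sign (P i) * (if P i \<subseteq> {y. v \<bullet> y < r} then 1 else 0)) =
    (\<Sum>C\<in>sign_cell hs ` (\<Union>i\<in>I. rel_interior (P i)).
       dim_sign C * (\<Sum>i\<in>{i\<in>I. C \<subseteq> rel_interior (P i)}. c i) *
       (if closure C \<subseteq> {y. v \<bullet> y < r} then 1 else 0))"
proof -
  define Cs where "Cs = sign_cell hs ` (\<Union>i\<in>I. rel_interior (P i))"
  define ind where "ind X = (if X \<subseteq> {y. v \<bullet> y < r} then 1 else 0 :: int)" for X
  have cells: "cells (P i) hs = sign_cell hs ` rel_interior (P i)" if "i \<in> I" for i
    using refined[OF that] by (rule cells_refined)
  have "Cs = (\<Union>i\<in>I. cells (P i) hs)" unfolding Cs_def by (rule refined_cells_eq) (rule refined)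
  then have finCs: "finite Cs" using fin open_cell_cells[OF poly ne] by auto
  have inside: "{C\<in>Cs. C \<subseteq> rel_interior (P i)} = cells (P i) hs" if i: "i \<in> I" for i
  proof
    show "{C\<in>Cs. C \<subseteq> rel_interior (P i)} \<subseteq> cells (P i) hs"
    proof
      fix C assume "C \<in> {C\<in>Cs. C \<subseteq> rel_interior (P i)}"
      then obtain y where C: "C = sign_cell hs y" "C \<subseteq> rel_interior (P i)" unfolding Cs_def by blast
      then have "y \<in> rel_interior (P i)" using sign_cell_self[of y hs] by blast
      then show "C \<in> cells (P i) hs" unfolding cells[OF i] C(1) by (rule imageI)
    qed
    show "cells (P i) hs \<subseteq> {C\<in>Cs. C \<subseteq> rel_interior (P i)}"
    proof
      fix C assume "C \<in> cells (P i) hs"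
      then obtain x where x: "x \<in> rel_interior (P i)" "C = sign_cell hs x" unfolding cells[OF i]
        by blast
      then have "C \<in> Cs" unfolding Cs_def using i by blast
      then show "C \<in> {C\<in>Cs. C \<subseteq> rel_interior (P i)}" using refined[OF i x(1)] x(2) by blast
    qed
  qed
  have "(\<Sum>C\<in>Cs. dim_sign C * (\<Sum>i\<in>{i\<in>I. C \<subseteq> rel_interior (P i)}. c i) * ind (closure C)) =
      (\<Sum>C\<in>Cs. \<Sum>i\<in>I. if C \<subseteq> rel_interior (P i) then c i * (dim_sign C * ind (closure C)) else 0)"
    unfolding sum.inter_filter[OF fin, symmetric] sum_distrib_right[symmetric]
      by (simp only: mult_ac)
  also have "\<dots> = (\<Sum>i\<in>I. \<Sum>C\<in>Cs.
      if C \<subseteq> rel_interior (P i) then c i * (dim_sign C * ind (closure C)) else 0)"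
    by (rule sum.swap)
  also have "\<dots> = (\<Sum>i\<in>I. c i * (\<Sum>C\<in>cells (P i) hs. dim_sign C * ind (closure C)))"
    by (rule sum.cong[OF refl])
      (simp add: sum.inter_filter[OF finCs, symmetric] inside sum_distrib_left)
  also have "\<dots> = (\<Sum>i\<in>I. c i * dim_sign (P i) * ind (P i))"
    using sum_cells[OF poly ne] by (simp add: ind_def mult.assoc)
  finally show ?thesis unfolding Cs_def ind_def by (rule sym)
qed

lemma open_cells_halfspace_sums_injective:
  fixes Cs :: "'a::euclidean_space set set" and a :: "'a set \<Rightarrow> int"
  assumes fin: "finite Cs" and cells: "\<forall>C\<in>Cs. open_cell C" and disj: "pairwise disjnt Cs"
    and zero: "\<And>v r. (\<Sum>C\<in>Cs. dim_sign C * a C * (if closure C \<subseteq> {y. v \<bullet> y < r} then 1 else 0)) = 0"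
  shows "\<forall>C\<in>Cs. a C = 0"
proof -
  have ri_closure: "rel_interior (closure C) = C" if "C \<in> Cs" for C
    using cells that convex_rel_interior_closure[of C] by (simp add: open_cell_def)
  have inj: "inj_on closure Cs"
  proof (rule inj_onI)
    fix C1 C2 assume "C1 \<in> Cs" "C2 \<in> Cs" "closure C1 = closure C2"
    then show "C1 = C2" using ri_closure by metis
  qed
  have "\<forall>Q\<in>closure ` Cs. (a \<circ> rel_interior) Q = 0"
  proof (rule halfspace_transform_injective)
    show "finite (closure ` Cs)" using fin by simp
    show "\<forall>Q\<in>closure ` Cs. polytope Q" using cells by (auto simp: open_cell_def)
    show "disjoint_family_on rel_interior (closure ` Cs)"
      unfolding disjoint_family_on_def
    proof (intro ballI impI)
      fix Q1 Q2 assume "Q1 \<in> closure ` Cs" "Q2 \<in> closure ` Cs" "Q1 \<noteq> Q2"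
      then obtain C1 C2 where "C1 \<in> Cs" "C2 \<in> Cs" "C1 \<noteq> C2" "Q1 = closure C1" "Q2 = closure C2"
        by blast
      then show "rel_interior Q1 \<inter> rel_interior Q2 = {}"
        using disj ri_closure unfolding pairwise_def disjnt_def by auto
    qed
    show "\<forall>v r. halfspace_transform (closure ` Cs) (a \<circ> rel_interior) v r = 0"
    proof (intro allI)
      fix v r
      have "halfspace_transform (closure ` Cs) (a \<circ> rel_interior) v r =
          (\<Sum>C\<in>Cs. dim_sign C * a C * (if closure C \<subseteq> {y. v \<bullet> y < r} then 1 else 0))"
        unfolding halfspace_transform_def sum.reindex[OF inj]
        by (rule sum.cong) (simp_all add: ri_closure dim_sign_def)
      then show "halfspace_transform (closure ` Cs) (a \<circ> rel_interior) v r = 0" using zero by simp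
    qed
  qed
  then show ?thesis using ri_closure by fastforce
qed

theorem sum_rel_interior_eq_0_if_halfspace_sums_eq_0:
  fixes P :: "'i \<Rightarrow> 'a::euclidean_space set" and c :: "'i \<Rightarrow> int"
  assumes fin: "finite I" and poly: "\<And>i. i \<in> I \<Longrightarrow> polytope (P i)" and ne: "\<And>i. i \<in> I \<Longrightarrow> P i \<noteq> {}"
    and zero: "\<And>v r. (\<Sum>i\<in>I. c i * dim_sign (P i) * (if P i \<subseteq> {y. v \<bullet> y < r} then 1 else 0)) = 0"
  shows "(\<Sum>i\<in>{i\<in>I. x \<in> rel_interior (P i)}. c i) = 0"
proof -
  obtain hs where refined:
    "\<And>i x. i \<in> I \<Longrightarrow> x \<in> rel_interior (P i) \<Longrightarrow> sign_cell hs x \<subseteq> rel_interior (P i)"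
    using common_refining_arrangement[of I P, OF fin poly] by blast
  define Cs where "Cs = sign_cell hs ` (\<Union>i\<in>I. rel_interior (P i))"
  have "Cs = (\<Union>i\<in>I. cells (P i) hs)" unfolding Cs_def by (rule refined_cells_eq) (rule refined)
  then have "finite Cs" "\<forall>C\<in>Cs. open_cell C" using fin open_cell_cells[OF poly ne] by auto
  then have coeff_zero: "\<forall>C\<in>Cs. (\<Sum>i\<in>{i\<in>I. C \<subseteq> rel_interior (P i)}. c i) = 0"
    using sign_cells_disjoint halfspace_sum_eq_sum_over_cells[OF fin poly ne refined] zero
    by (intro open_cells_halfspace_sums_injective) (simp_all add: Cs_def)
  show ?thesis
  proof (cases "x \<in> (\<Union>i\<in>I. rel_interior (P i))")
    case True
    then have "sign_cell hs x \<in> Cs" unfolding Cs_def by blast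
    then have "(\<Sum>i\<in>{i\<in>I. sign_cell hs x \<subseteq> rel_interior (P i)}. c i) = 0" using coeff_zero by blast
    moreover have "{i\<in>I. sign_cell hs x \<subseteq> rel_interior (P i)} = {i\<in>I. x \<in> rel_interior (P i)}"
      using refined sign_cell_self[of x hs] by blast
    ultimately show ?thesis by simp
  next
    case False
    then have "{i\<in>I. x \<in> rel_interior (P i)} = {}" by blast
    then show ?thesis by (metis sum.empty)
  qed
qed

section \<open>Weighted simplicial complexes\<close>

lemma simplex_in_complex:
  assumes "simplicial_complex K" "S \<in> K"
  shows "finite S" "S \<noteq> {}" "\<not> affine_dependent S"
  using assms unfolding simplicial_complex_def is_simplex_def by auto

lemma carrier_simplex_unique:
  fixes K :: "'a::euclidean_space set set"
  assumes K: "simplicial_complex K" and "S \<in> K" "T \<in> K"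
    and "x \<in> rel_interior (convex hull S)" "x \<in> rel_interior (convex hull T)"
  shows "S = T"
proof -
  have half: "A \<subseteq> B" if A: "A \<in> K" and B: "B \<in> K" and xA: "x \<in> rel_interior (convex hull A)"
    and xB: "x \<in> rel_interior (convex hull B)" for A B
  proof -
    have "convex hull A \<inter> convex hull B = convex hull (A \<inter> B)"
      using K A B unfolding simplicial_complex_def by blast
    then have x: "x \<in> convex hull (A \<inter> B)" using xA xB rel_interior_subset by blast
    have ia: "\<not> affine_dependent A" using simplex_in_complex[OF K A] by blast
    have "convex hull (A \<inter> B) face_of convex hull A"
      using face_of_convex_hull_affine_independent[OF ia] by blast
    then have eq: "convex hull (A \<inter> B) = convex hull A"
      using face_of_disjoint_rel_interior x xA by blast
    have ib: "\<not> affine_dependent (A \<inter> B)" using affine_independent_subset[OF ia] by blast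
    show "A \<subseteq> B"
    proof
      fix z assume "z \<in> A"
      then have "z extreme_point_of convex hull (A \<inter> B)"
        using extreme_point_of_convex_hull_affine_independent[OF ia] eq by simp
      then show "z \<in> B" using extreme_point_of_convex_hull_affine_independent[OF ib] by blast
    qed
  qed
  show ?thesis using half[OF assms(2,3,4,5)] half[OF assms(3,2,5,4)] by (rule antisym)
qed

lemma carrier_simplex_exists:
  fixes K :: "'a::euclidean_space set set"
  assumes K: "simplicial_complex K" and S: "S \<in> K" and x: "x \<in> convex hull S"
  obtains T where "T \<in> K" "x \<in> rel_interior (convex hull T)"
proof -
  have fS: "finite S" and iS: "\<not> affine_dependent S" using simplex_in_complex[OF K S] by auto
  obtain u where u: "\<forall>z\<in>S. 0 \<le> u z" "sum u S = 1" "(\<Sum>z\<in>S. u z *\<^sub>R z) = x"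
    using x convex_hull_finite[OF fS] by blast
  define T where "T = {z\<in>S. 0 < u z}"
  have TS: "T \<subseteq> S" unfolding T_def by blast
  have zero: "\<forall>z\<in>S - T. u z = 0" using u(1) unfolding T_def by force
  have sT: "sum u T = 1" using sum.mono_neutral_left[OF fS TS zero] u(2) by simp
  have xT: "(\<Sum>z\<in>T. u z *\<^sub>R z) = x"
    using sum.mono_neutral_left[OF fS TS, of "\<lambda>z. u z *\<^sub>R z"] zero u(3) by simp
  have "T \<noteq> {}" using sT by auto
  then have "T \<in> K" using K S TS unfolding simplicial_complex_def by blast
  moreover have "x \<in> rel_interior (convex hull T)"
    unfolding rel_interior_convex_hull_explicit[OF affine_independent_subset[OF iS TS]]
    using sT xT T_def by blast
  ultimately show thesis by (rule that)
qed

lemma carrier_simplex_eq: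
  fixes K :: "'a::euclidean_space set set"
  assumes K: "simplicial_complex K" and S: "S \<in> K" "x \<in> rel_interior (convex hull S)"
  shows "T \<in> K \<and> x \<in> rel_interior (convex hull T) \<longleftrightarrow> T = S"
  using carrier_simplex_unique[OF K _ S(1) _ S(2), of T] S by blast

lemma assoc_fun_eq_sum:
  fixes K :: "'a::euclidean_space set set"
  assumes K: "simplicial_complex K"
  shows "assoc_fun K g x = (\<Sum>S\<in>{S\<in>K. x \<in> rel_interior (convex hull S)}. g S)"
proof (cases "\<exists>S\<in>K. x \<in> rel_interior (convex hull S)")
  case True
  then obtain S where S: "S \<in> K" "x \<in> rel_interior (convex hull S)" by blast
  note carrier = carrier_simplex_eq[OF K S]
  have "{T\<in>K. x \<in> rel_interior (convex hull T)} = {S}" using carrier by blast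
  moreover have "(THE T. T \<in> K \<and> x \<in> rel_interior (convex hull T)) = S"
    by (simp only: carrier the_eq_trivial)
  ultimately show ?thesis using True by (simp add: assoc_fun_def)
next
  case False
  then have "{S\<in>K. x \<in> rel_interior (convex hull S)} = {}" by blast
  moreover have "assoc_fun K g x = 0" using False by (simp add: assoc_fun_def)
  ultimately show ?thesis by (metis sum.empty)
qed

lemma assoc_fun_nonzero_iff:
  fixes K :: "'a::euclidean_space set set"
  assumes "weighted_complex K g"
  shows "assoc_fun K g x \<noteq> 0 \<longleftrightarrow> x \<in> underlying_space K"
proof
  assume "assoc_fun K g x \<noteq> 0"
  then have "\<exists>S\<in>K. x \<in> rel_interior (convex hull S)" unfolding assoc_fun_def
    by (cases "\<exists>S\<in>K. x \<in> rel_interior (convex hull S)") simp_all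
  then obtain S where "S \<in> K" "x \<in> rel_interior (convex hull S)" by blast
  then show "x \<in> underlying_space K"
    unfolding underlying_space_def using rel_interior_subset by blast
next
  have K: "simplicial_complex K" using assms by (simp add: weighted_complex_def)
  assume "x \<in> underlying_space K"
  then obtain S where "S \<in> K" "x \<in> convex hull S" unfolding underlying_space_def by blast
  then obtain T where T: "T \<in> K" "x \<in> rel_interior (convex hull T)"
    by (rule carrier_simplex_exists[OF K])
  then have "{S\<in>K. x \<in> rel_interior (convex hull S)} = {T}"
    using carrier_simplex_eq[OF K T] by blast
  moreover have "g T \<ge> 1" using assms T(1) by (simp add: weighted_complex_def)
  ultimately show "assoc_fun K g x \<noteq> 0" by (simp add: assoc_fun_eq_sum[OF K])
qed

lemma sublevel_eq:
  fixes K :: "'a::euclidean_space set set"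
  assumes "simplicial_complex K"
  shows "sublevel K v r = {S\<in>K. \<forall>u\<in>S. v \<bullet> u \<le> r}"
proof -
  have "height v S \<le> r \<longleftrightarrow> (\<forall>u\<in>S. v \<bullet> u \<le> r)" if "S \<in> K" for S
    using simplex_in_complex[OF assms that] by (simp add: height_def)
  then show ?thesis unfolding sublevel_def by blast
qed

lemma WECT_scaleR:
  fixes K :: "'a::euclidean_space set set"
  assumes "simplicial_complex K" "c > 0"
  shows "WECT K g (c *\<^sub>R v) (c * r) = WECT K g v r"
  using assms by (simp add: WECT_def sublevel_eq)

lemma WECT_above:
  fixes K :: "'a::euclidean_space set set"
  assumes "simplicial_complex K" "\<forall>S\<in>K. \<forall>u\<in>S. v \<bullet> u \<le> r"
  shows "WECT K g v r = weighted_euler_char K g"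
proof -
  have "sublevel K v r = K" using assms by (auto simp: sublevel_eq)
  then show ?thesis by (simp add: WECT_def)
qed

lemma WECT_zero_direction:
  fixes K :: "'a::euclidean_space set set"
  assumes "simplicial_complex K"
  shows "WECT K g 0 r = (if 0 \<le> r then weighted_euler_char K g else 0)"
proof -
  have "sublevel K 0 r = (if 0 \<le> r then K else {})"
    using simplex_in_complex(2)[OF assms] by (auto simp: sublevel_eq[OF assms])
  then show ?thesis by (simp add: WECT_def weighted_euler_char_def)
qed

text \<open>
  Rescaling reduces to unit directions; in direction \<open>0\<close> a sublevel set is all of the complex
  or empty, and the whole complex is also the sublevel set at a level above all vertices.
\<close>

lemma WECT_eq_all_directions:
  fixes K1 K2 :: "'a::euclidean_space set set"
  assumes "weighted_complex K1 g1" "weighted_complex K2 g2"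
    and eq: "\<forall>v\<in>sphere 0 1. \<forall>r. WECT K1 g1 v r = WECT K2 g2 v r"
  shows "WECT K1 g1 v r = WECT K2 g2 v r"
proof -
  have K1: "simplicial_complex K1" and K2: "simplicial_complex K2"
    using assms(1,2) by (simp_all add: weighted_complex_def)
  show ?thesis
  proof (cases "v = 0")
    case False
    define e where "e = v /\<^sub>R norm v"
    have n: "norm v > 0" using False by simp
    have v: "norm v *\<^sub>R e = v" and r: "norm v * (r / norm v) = r" using n by (simp_all add: e_def)
    have "WECT K1 g1 v r = WECT K1 g1 e (r / norm v)" "WECT K2 g2 v r = WECT K2 g2 e (r / norm v)"
      using WECT_scaleR[OF K1 n, of g1 e "r / norm v"] WECT_scaleR[OF K2 n, of g2 e "r / norm v"]
      unfolding v r by simp_all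
    moreover have "e \<in> sphere 0 1" using n by (simp add: e_def)
    ultimately show ?thesis using eq by simp
  next
    case True
    obtain e :: 'a where e: "e \<in> Basis" using nonempty_Basis by blast
    define U where "U = \<Union>K1 \<union> \<Union>K2"
    have "finite U"
      unfolding U_def using K1 K2 simplex_in_complex(1)[OF K1] simplex_in_complex(1)[OF K2]
      by (auto simp: simplicial_complex_def)
    define R where "R = (\<Sum>u\<in>U. norm u)"
    have "e \<bullet> u \<le> R" if "u \<in> U" for u
    proof -
      have "e \<bullet> u \<le> norm u" using Basis_le_norm[OF e, of u] by (simp add: inner_commute)
      also have "\<dots> \<le> R" unfolding R_def by (rule member_le_sum) (use that \<open>finite U\<close> in auto)
      finally show ?thesis .
    qed
    then have "WECT K1 g1 e R = weighted_euler_char K1 g1"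
      "WECT K2 g2 e R = weighted_euler_char K2 g2"
      by (intro WECT_above K1 K2; auto simp: U_def)+
    moreover have "e \<in> sphere 0 1" using e by simp
    ultimately show ?thesis using True eq WECT_zero_direction[OF K1] WECT_zero_direction[OF K2]
      by metis
  qed
qed

lemma dim_sign_convex_hull_simplex:
  fixes S :: "'a::euclidean_space set"
  assumes "finite S" "S \<noteq> {}" "\<not> affine_dependent S"
  shows "dim_sign (convex hull S) = - ((-1) ^ simplex_dim S)"
proof -
  have "aff_dim (convex hull S) + 1 = int (card S)"
    using aff_dim_affine_independent[OF assms(3)] by (simp add: aff_dim_convex_hull)
  moreover have "card S = Suc (simplex_dim S)"
    using assms(1,2) by (simp add: simplex_dim_def card_gt_0_iff)
  ultimately have "nat (aff_dim (convex hull S) + 1) = Suc (simplex_dim S)" by simp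
  then show ?thesis by (simp add: dim_sign_def)
qed

lemma halfspace_sum_simplices_eq_WECT:
  fixes K :: "'a::euclidean_space set set"
  assumes K: "simplicial_complex K" and "\<epsilon> > 0"
    and gap: "\<forall>S\<in>K. \<forall>u\<in>S. v \<bullet> u < r \<longrightarrow> v \<bullet> u \<le> r - \<epsilon>"
  shows "(\<Sum>S\<in>K. int (g S) * dim_sign (convex hull S) *
            (if convex hull S \<subseteq> {y. v \<bullet> y < r} then 1 else 0)) = - WECT K g v (r - \<epsilon>)"
proof -
  have fin: "finite K" using K by (simp add: simplicial_complex_def)
  have summand: "int (g S) * dim_sign (convex hull S) *
        (if convex hull S \<subseteq> {y. v \<bullet> y < r} then 1 else 0)
      = - (if \<forall>u\<in>S. v \<bullet> u \<le> r - \<epsilon> then (-1) ^ simplex_dim S * int (g S) else 0)" if S: "S \<in> K" for S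
  proof -
    have "convex hull S \<subseteq> {y. v \<bullet> y < r} \<longleftrightarrow> S \<subseteq> {y. v \<bullet> y < r}"
      using hull_minimal[of S "{y. v \<bullet> y < r}" convex] convex_halfspace_lt hull_subset[of S convex]
        by blast
    also have "\<dots> \<longleftrightarrow> (\<forall>u\<in>S. v \<bullet> u \<le> r - \<epsilon>)" using gap S \<open>\<epsilon> > 0\<close> by fastforce
    finally show ?thesis
      using dim_sign_convex_hull_simplex[OF simplex_in_complex[OF K S]] by (simp add: mult_ac)
  qed
  have "(\<Sum>S\<in>K. int (g S) * dim_sign (convex hull S) *
        (if convex hull S \<subseteq> {y. v \<bullet> y < r} then 1 else 0))
      = (\<Sum>S\<in>K. - (if \<forall>u\<in>S. v \<bullet> u \<le> r - \<epsilon> then (-1) ^ simplex_dim S * int (g S) else 0))"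
    using summand by (rule sum.cong[OF refl])
  also have "\<dots> = - WECT K g v (r - \<epsilon>)"
    unfolding WECT_def weighted_euler_char_def sublevel_eq[OF K] sum.inter_filter[OF fin]
    by (simp add: sum_negf)
  finally show ?thesis .
qed

lemma sum_weight_difference:
  fixes a b f :: "'b \<Rightarrow> int"
  assumes "finite A"
  shows "(\<Sum>S\<in>A. ((if S \<in> K1 then a S else 0) - (if S \<in> K2 then b S else 0)) * f S) =
    (\<Sum>S\<in>A \<inter> K1. a S * f S) - (\<Sum>S\<in>A \<inter> K2. b S * f S)"
proof -
  have "((if S \<in> K1 then a S else 0) - (if S \<in> K2 then b S else 0)) * f S =
      (if S \<in> K1 then a S * f S else 0) - (if S \<in> K2 then b S * f S else 0)" for S
    by (simp add: left_diff_distrib)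
  then show ?thesis using assms by (simp add: sum_subtractf sum.inter_restrict)
qed

lemma halfspace_sum_weight_difference_eq_0:
  fixes K1 K2 :: "'a::euclidean_space set set"
  assumes w1: "weighted_complex K1 g1" and w2: "weighted_complex K2 g2"
    and eq: "\<forall>v\<in>sphere 0 1. \<forall>r. WECT K1 g1 v r = WECT K2 g2 v r"
  shows "(\<Sum>S\<in>K1 \<union> K2. ((if S \<in> K1 then int (g1 S) else 0) - (if S \<in> K2 then int (g2 S) else 0)) *
            dim_sign (convex hull S) * (if convex hull S \<subseteq> {y. v \<bullet> y < r} then 1 else 0)) = 0"
proof -
  have K1: "simplicial_complex K1" and K2: "simplicial_complex K2"
    using w1 w2 by (simp_all add: weighted_complex_def)
  then have fin: "finite K1" "finite K2" by (simp_all add: simplicial_complex_def)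
  define U where "U = \<Union>K1 \<union> \<Union>K2"
  have "finite {u\<in>U. v \<bullet> u < r}"
    unfolding U_def using fin simplex_in_complex(1)[OF K1] simplex_in_complex(1)[OF K2] by auto
  then obtain \<epsilon> where \<epsilon>: "\<epsilon> > 0" and \<epsilon>_le: "\<And>u. u \<in> {u\<in>U. v \<bullet> u < r} \<Longrightarrow> \<epsilon> \<le> r - v \<bullet> u"
    by (rule finite_positive_lower_bound[of _ "\<lambda>u. r - v \<bullet> u"]) auto
  have gap: "\<forall>S\<in>K. \<forall>u\<in>S. v \<bullet> u < r \<longrightarrow> v \<bullet> u \<le> r - \<epsilon>" if "K = K1 \<or> K = K2" for K
    using \<epsilon>_le that unfolding U_def by fastforce
  have "(\<Sum>S\<in>K1. int (g1 S) * (dim_sign (convex hull S) *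
            (if convex hull S \<subseteq> {y. v \<bullet> y < r} then 1 else 0))) =
        (\<Sum>S\<in>K2. int (g2 S) * (dim_sign (convex hull S) *
            (if convex hull S \<subseteq> {y. v \<bullet> y < r} then 1 else 0)))"
    using halfspace_sum_simplices_eq_WECT[OF K1 \<epsilon> gap] halfspace_sum_simplices_eq_WECT[OF K2 \<epsilon> gap]
      WECT_eq_all_directions[OF w1 w2 eq] by (simp add: mult.assoc)
  moreover have "(K1 \<union> K2) \<inter> K1 = K1" "(K1 \<union> K2) \<inter> K2 = K2" by auto
  ultimately show ?thesis
    using sum_weight_difference[of "K1 \<union> K2"] fin by (simp add: mult.assoc)
qed

lemma assoc_fun_difference:
  fixes K1 K2 :: "'a::euclidean_space set set"
  assumes K1: "simplicial_complex K1" and K2: "simplicial_complex K2"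
  shows "int (assoc_fun K1 g1 x) - int (assoc_fun K2 g2 x) =
    (\<Sum>S\<in>{S\<in>K1 \<union> K2. x \<in> rel_interior (convex hull S)}.
       (if S \<in> K1 then int (g1 S) else 0) - (if S \<in> K2 then int (g2 S) else 0))"
proof -
  let ?A = "{S\<in>K1 \<union> K2. x \<in> rel_interior (convex hull S)}"
  have "finite ?A" using K1 K2 by (simp add: simplicial_complex_def)
  moreover have "?A \<inter> K1 = {S\<in>K1. x \<in> rel_interior (convex hull S)}"
    "?A \<inter> K2 = {S\<in>K2. x \<in> rel_interior (convex hull S)}" by blast+
  ultimately show ?thesis
    using sum_weight_difference[of ?A K1 "\<lambda>S. int (g1 S)" K2 "\<lambda>S. int (g2 S)" "\<lambda>_. 1"]
    by (simp add: assoc_fun_eq_sum[OF K1] assoc_fun_eq_sum[OF K2])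
qed

theorem mainTheorem2:
  fixes K1 K2 :: "'a::euclidean_space set set"
    and g1 g2 :: "'a set \<Rightarrow> nat"
  assumes "weighted_complex K1 g1"
    and "weighted_complex K2 g2"
    and "\<forall>v\<in>sphere 0 1. \<forall>r. WECT K1 g1 v r = WECT K2 g2 v r"
  shows "(\<forall>x. assoc_fun K1 g1 x = assoc_fun K2 g2 x)
         \<and> underlying_space K1 = underlying_space K2"
proof -
  have K1: "simplicial_complex K1" and K2: "simplicial_complex K2"
    using assms(1,2) by (simp_all add: weighted_complex_def)
  then have fin: "finite (K1 \<union> K2)" by (simp add: simplicial_complex_def)
  have simplex: "polytope (convex hull S) \<and> convex hull S \<noteq> {}" if "S \<in> K1 \<union> K2" for S
  proof -
    have "finite S" "S \<noteq> {}" using that simplex_in_complex[OF K1] simplex_in_complex[OF K2]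
      by blast+
    then show ?thesis using polytope_convex_hull by simp
  qed
  define c where
    "c S = (if S \<in> K1 then int (g1 S) else 0) - (if S \<in> K2 then int (g2 S) else 0)" for S
  have "(\<Sum>S\<in>{S\<in>K1 \<union> K2. x \<in> rel_interior (convex hull S)}. c S) = 0" for x
    using halfspace_sum_weight_difference_eq_0[OF assms] simplex
    by (intro sum_rel_interior_eq_0_if_halfspace_sums_eq_0 fin) (simp_all add: c_def)
  then have assoc: "assoc_fun K1 g1 x = assoc_fun K2 g2 x" for x
    using assoc_fun_difference[OF K1 K2, of g1 x g2] by (simp add: c_def)
  have "x \<in> underlying_space K1 \<longleftrightarrow> x \<in> underlying_space K2" for x
    using assoc_fun_nonzero_iff[OF assms(1), of x] assoc_fun_nonzero_iff[OF assms(2), of x]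
      assoc[of x]
    by simp
  then show ?thesis using assoc by blast
qed

end
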